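(* Let $\mu$ be a critical offspring distribution on $\mathbb{Z}_+$ and let $\mathbf{P}_\mu$ be the probability measure on the set $\mathbb{T}$ of infinite trees described in the context. Then $\mathbf{P}_\mu$ is invariant under the shift $\tau:\mathbb{T}\to\mathbb{T}$, i.e. if $\mathcal{T}$ has law $\mathbf{P}_\mu$ then $\tau(\mathcal{T})$ has law $\mathbf{P}_\mu$.
   Context: Plane trees: let $\mathcal{U}=\bigcup_{n\ge0}\mathbb{N}^n$ ($\mathbb{N}=\{1,2,\dots\}$, $\mathbb{N}^0=\{\varnothing\}$), with lexicographical order $\prec$ and concatenation $uv$. A plane tree is a finite $\mathcal{T}\subset\mathcal{U}$ with $\varnothing\in\mathcal{T}$, closed under taking parents $(u_1,\dots,u_n)\mapsto(u_1,\dots,u_{n-1})$, and such that for each $u\in\mathcal{T}$ there is $k_u(\mathcal{T})\ge0$ (number of children) with $uj\in\mathcal{T}$ iff $1\le j\le k_u(\mathcal{T})$. For $u\in\mathcal{T}$, $[\mathcal{T}]_u=\{v: uv\in\mathcal{T}\}$. $\mu$ is a probability measure on $\mathbb{Z}_+$ with $\sum_k k\mu(k)=1$ and $\mu(1)\ne1$; $\Pi_\mu$ is the law of a Galton–Watson tree with offspring distribution $\mu$ (viewed as a random plane tree). Infinite trees: let $\mathcal{V}=\mathbb{Z}_-\times\mathcal{U}$ with $\mathbb{Z}_-=\{0,-1,-2,\dots\}$, identifying $j\in\mathbb{Z}_-$ with $(j,\varnothing)$. An infinite tree is a subset $\mathcal{T}\subset\mathcal{V}$ containing $\mathbb{Z}_-$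 such that for every $j\in\mathbb{Z}_-$, $\mathcal{T}_j:=\{u\in\mathcal{U}:(j,u)\in\mathcal{T}\}$ is a plane tree, and $\mathcal{T}\setminus\mathbb{Z}_-$ is infinite; $\mathbb{T}$ denotes the set of infinite trees (the tree is determined by $(\mathcal{T}_j)_{j\le0}$). The vertices of $\mathcal{T}\setminus\mathbb{Z}_-$ are ordered lexicographically by: $(j,u)\prec(j',u')$ iff $j>j'$, or $j=j'$ and $u\prec u'$. Shift: for $\mathcal{T}\in\mathbb{T}$, let $k\in\mathbb{Z}_-$ be the largest $j\le 0$ with $k_\varnothing(\mathcal{T}_j)\ge1$ (so that $(k,1)$ is the first vertex of $\mathcal{T}\setminus\mathbb{Z}_-$ in lexicographical order). Then $\tau(\mathcal{T})=\mathcal{T}'$ is the infinite tree with $\mathcal{T}'_j=\mathcal{T}_{j+k+1}$ for $j\le-2$, $\mathcal{T}'_0=[\mathcal{T}_k]_1$, and $\mathcal{T}'_{-1}$ the unique plane tree for which there is a bijection from $\mathcal{T}_k\setminus\{u\in\mathcal{T}_k: u=1w \text{ for some } w\in\mathcal{U}\}$ onto $\mathcal{T}'_{-1}$ preserving both lexicographical and genealogical order. $\mathbf{P}_\mu$ is the law on $\mathbb{T}$ under which $\mathcal{T}_0,\mathcal{T}_{-1},\mathcal{T}_{-2},\dots$ are independent, $\mathcal{T}_0$ has law $\Pi_\mu$, and for each $j\le-1$, $\mathbf{P}_\mu(k_\varnothing(\mathcal{T}_j)=n)=\mu([n+1,\infty))$ for $n\ge0$ and, conditionally on $k_\varnothing(\mathcal{T}_j)=n$,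 the subtrees $[\mathcal{T}_j]_1,\dots,[\mathcal{T}_j]_n$ are independent with law $\Pi_\mu$. *)

theory Defs
  imports "HOL-Probability.Probability"
begin

text \<open>Vertices of plane trees are finite words over positive integers, i.e. nat lists
  with entries at least 1. The child u j of u is the list u @ [j]; the parent of a
  nonempty word is butlast.\<close>

definition plane_tree :: "nat list set \<Rightarrow> bool" where
  "plane_tree T \<longleftrightarrow> finite T \<and> [] \<in> T \<and>
     (\<forall>u\<in>T. \<forall>x\<in>set u. 1 \<le> x) \<and>
     (\<forall>u\<in>T. u \<noteq> [] \<longrightarrow> butlast u \<in> T) \<and>
     (\<forall>u\<in>T. \<exists>k::nat. \<forall>j. u @ [j] \<in> T \<longleftrightarrow> 1 \<le> j \<and> j \<le> k)"

definition kids :: "nat list set \<Rightarrow> nat list \<Rightarrow> nat" where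
  "kids T u = card {j. u @ [j] \<in> T}"

definition subtree :: "nat list set \<Rightarrow> nat list \<Rightarrow> nat list set" where
  "subtree T u = {v. u @ v \<in> T}"

text \<open>lexicographical order on words (a proper prefix comes first)\<close>
definition lex_less :: "nat list \<Rightarrow> nat list \<Rightarrow> bool" where
  "lex_less u v \<longleftrightarrow> (u, v) \<in> lexord {(a, b). a < b}"

definition gen_le :: "nat list \<Rightarrow> nat list \<Rightarrow> bool" where
  "gen_le u v \<longleftrightarrow> prefix u v"

definition gw_weight :: "nat pmf \<Rightarrow> nat list set \<Rightarrow> real" where
  "gw_weight mu t = (\<Prod>u\<in>t. pmf mu (kids t u))"

definition GW :: "nat pmf \<Rightarrow> nat list set measure" where
  "GW mu = density (count_space UNIV)
     (\<lambda>t. if plane_tree t then ennreal (gw_weight mu t) else 0)"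

text \<open>Law of T_j for j \<le> -1: root degree n with probability mu([n+1,oo)), and
  conditionally on it the n subtrees of the root are i.i.d. with law Pi_mu.\<close>
definition GW_spine :: "nat pmf \<Rightarrow> nat list set measure" where
  "GW_spine mu = density (count_space UNIV)
     (\<lambda>t. if plane_tree t then
            ennreal (measure_pmf.prob mu {Suc (kids t [])..} *
                     (\<Prod>i\<in>{1..kids t []}. gw_weight mu (subtree t [i])))
          else 0)"

text \<open>An infinite tree is encoded by the sequence of its plane trees:
  f i = T_{-i} for i :: nat.\<close>
definition infinite_trees :: "(nat \<Rightarrow> nat list set) set" where
  "infinite_trees = {f. (\<forall>i. plane_tree (f i)) \<and>
      infinite (\<Union>i. {(i, u) | u. u \<in> f i \<and> u \<noteq> []})}"

definition tree_product :: "nat pmf \<Rightarrow> (nat \<Rightarrow> nat list set) measure" where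
  "tree_product mu = (\<Pi>\<^sub>M i\<in>(UNIV::nat set). if i = 0 then GW mu else GW_spine mu)"

definition P_mu :: "nat pmf \<Rightarrow> (nat \<Rightarrow> nat list set) measure" where
  "P_mu mu = restrict_space (tree_product mu) infinite_trees"

definition cut_first :: "nat list set \<Rightarrow> nat list set" where
  "cut_first T = {u \<in> T. \<not> (\<exists>w. u = 1 # w)}"

definition reduced :: "nat list set \<Rightarrow> nat list set" where
  "reduced T = (THE T'. plane_tree T' \<and>
     (\<exists>\<phi>. bij_betw \<phi> (cut_first T) T' \<and>
        (\<forall>u\<in>cut_first T. \<forall>v\<in>cut_first T.
           (lex_less u v \<longleftrightarrow> lex_less (\<phi> u) (\<phi> v)) \<and>
           (gen_le u v \<longleftrightarrow> gen_le (\<phi> u) (\<phi> v)))))"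

text \<open>first index m (so k = -m) with k_root(T_{-m}) \<ge> 1\<close>
definition first_nontriv :: "(nat \<Rightarrow> nat list set) \<Rightarrow> nat" where
  "first_nontriv f = (LEAST i. 1 \<le> kids (f i) [])"

text \<open>T'_0 = [T_k]_1, T'_{-1} = reduced T_k, T'_j = T_{j+k+1} for j \<le> -2\<close>
definition tau :: "(nat \<Rightarrow> nat list set) \<Rightarrow> (nat \<Rightarrow> nat list set)" where
  "tau f = (let m = first_nontriv f in
     (\<lambda>i. if i = 0 then subtree (f m) [1]
          else if i = 1 then reduced (f m)
          else f (i + m - 1)))"

end

theory Submission
  imports Defs
begin

text \<open>A plane tree t whose root has a child is determined by its first root subtree
  s = [t]_1 and by the tree r = reduced t left after deleting it. If Pi is the Galton--Watson
  law and Pi* the law of the trees T_j, j < 0, then Pi(t) + Pi*(t) = Pi(s) Pi*(r), because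
  mu(k+1) + mu([k+2,oo)) = mu([k+1,oo)) where k is the root degree of r. The shift looks at the
  first index m whose root is not a leaf; the roots before it are leaves with probability
  mu(0) (1 - mu(0))^(m-1) for m \<ge> 1. Summing the case m = 0 and this geometric series,
  [T_m]_1 and reduced T_m are independent with laws Pi and Pi*, while the trees after T_m are
  merely re-indexed; hence the shift preserves the measure of every cylinder.

  Criticality is what makes these measures probability measures: the total mass of Pi is a
  fixed point of the generating function of mu in [0, 1], and a critical generating function
  has no fixed point below 1; the total mass of Pi* is the mean of mu. It also forces
  mu(0) > 0, so almost every sequence of trees has infinitely many roots that are not leaves,
  and the set of infinite trees carrying P_mu has full measure.\<close>

section \<open>Plane trees\<close>

lemma plane_tree_finite: "plane_tree T \<Longrightarrow> finite T"
  and plane_tree_Nil: "plane_tree T \<Longrightarrow> [] \<in> T"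
  and plane_tree_letters_ge_1: "plane_tree T \<Longrightarrow> u \<in> T \<Longrightarrow> x \<in> set u \<Longrightarrow> 1 \<le> x"
  and plane_tree_butlast: "plane_tree T \<Longrightarrow> u \<in> T \<Longrightarrow> u \<noteq> [] \<Longrightarrow> butlast u \<in> T"
  and plane_tree_children_interval:
    "plane_tree T \<Longrightarrow> u \<in> T \<Longrightarrow> \<exists>k. \<forall>j. u @ [j] \<in> T \<longleftrightarrow> 1 \<le> j \<and> j \<le> k"
  unfolding plane_tree_def by blast+

lemma plane_treeI:
  assumes "finite T" "[] \<in> T" "\<And>u x. u \<in> T \<Longrightarrow> x \<in> set u \<Longrightarrow> 1 \<le> x"
    "\<And>u. u \<in> T \<Longrightarrow> u \<noteq> [] \<Longrightarrow> butlast u \<in> T"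
    "\<And>u. u \<in> T \<Longrightarrow> \<exists>k. \<forall>j. u @ [j] \<in> T \<longleftrightarrow> 1 \<le> j \<and> j \<le> k"
  shows "plane_tree T"
  unfolding plane_tree_def using assms by simp

lemma plane_tree_prefix_closed:
  assumes "plane_tree T" "u \<in> T" "prefix v u" shows "v \<in> T"
  using assms(2,3)
proof (induction u rule: rev_induct)
  case (snoc x xs)
  have "xs \<in> T" using plane_tree_butlast[OF assms(1) snoc.prems(1)] by simp
  then show ?case using snoc by auto
qed simp

lemma plane_tree_snoc_iff:
  assumes "plane_tree T" "u \<in> T" shows "u @ [j] \<in> T \<longleftrightarrow> 1 \<le> j \<and> j \<le> kids T u"
proof -
  obtain k where k: "\<forall>j. u @ [j] \<in> T \<longleftrightarrow> 1 \<le> j \<and> j \<le> k"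
    using plane_tree_children_interval[OF assms] by blast
  then have "{j. u @ [j] \<in> T} = {1..k}" by (intro set_eqI) simp
  then show ?thesis using k unfolding kids_def by simp
qed

lemma plane_tree_left_sibling:
  assumes "plane_tree T" "p @ [c] \<in> T" "1 \<le> j" "j \<le> c" shows "p @ [j] \<in> T"
proof -
  have "p \<in> T" using plane_tree_prefix_closed[OF assms(1,2)] by simp
  then show ?thesis using plane_tree_snoc_iff[OF assms(1)] assms by auto
qed

lemma kids_Nil_ge_1:
  assumes "plane_tree T" "u \<in> T" "u \<noteq> []" shows "1 \<le> kids T []"
proof -
  obtain x w where u: "u = x # w" using assms(3) by (cases u) auto
  have "[] @ [x] \<in> T" using plane_tree_prefix_closed[OF assms(1,2)] u by simp
  then show ?thesis using plane_tree_snoc_iff[OF assms(1) plane_tree_Nil[OF assms(1)]] by simp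
qed

lemma plane_tree_subtree:
  assumes "plane_tree t" "u \<in> t" shows "plane_tree (subtree t u)"
  unfolding subtree_def
proof (rule plane_treeI)
  show "finite {v. u @ v \<in> t}"
    using finite_vimageI[OF plane_tree_finite[OF assms(1)], of "\<lambda>v. u @ v"] by (simp add: vimage_def inj_on_def)
  show "v \<in> {v. u @ v \<in> t} \<Longrightarrow> v \<noteq> [] \<Longrightarrow> butlast v \<in> {v. u @ v \<in> t}" for v
    using plane_tree_butlast[OF assms(1), of "u @ v"] by (simp add: butlast_append)
  show "\<exists>k. \<forall>j. v @ [j] \<in> {v. u @ v \<in> t} \<longleftrightarrow> 1 \<le> j \<and> j \<le> k" if "v \<in> {v. u @ v \<in> t}" for v
    using plane_tree_children_interval[OF assms(1), of "u @ v"] that by simp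
  show "1 \<le> x" if "v \<in> {v. u @ v \<in> t}" "x \<in> set v" for v x
    using plane_tree_letters_ge_1[OF assms(1)] that by auto
qed (use assms in simp)

definition join_trees :: "nat list set list \<Rightarrow> nat list set" where
  "join_trees ts = insert [] (\<Union>i<length ts. (\<lambda>w. Suc i # w) ` (ts ! i))"

definition root_subtrees :: "nat list set \<Rightarrow> nat list set list" where
  "root_subtrees t = map (\<lambda>i. subtree t [Suc i]) [0..<kids t []]"

lemma Nil_in_join_trees [simp]: "[] \<in> join_trees ts"
  and Cons_in_join_trees_iff [simp]: "Suc i # w \<in> join_trees ts \<longleftrightarrow> i < length ts \<and> w \<in> ts ! i"
  and zero_Cons_notin_join_trees [simp]: "0 # w \<notin> join_trees ts"
  by (auto simp: join_trees_def)

lemma in_join_treesE: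
  assumes "u \<in> join_trees ts"
  obtains "u = []" | i w where "u = Suc i # w" "i < length ts" "w \<in> ts ! i"
  using assms by (auto simp: join_trees_def)

lemma kids_join_trees_Nil:
  assumes "\<forall>s\<in>set ts. [] \<in> s" shows "kids (join_trees ts) [] = length ts"
proof -
  have "{j. [j] \<in> join_trees ts} = {1..length ts}"
  proof safe
    fix j assume "[j] \<in> join_trees ts"
    then show "j \<in> {1..length ts}" by (cases j) auto
  next
    fix j assume "j \<in> {1..length ts}"
    then obtain i where "j = Suc i" "i < length ts" by (cases j) auto
    then show "[j] \<in> join_trees ts" using assms by (auto simp: nth_mem)
  qed
  then show ?thesis by (simp add: kids_def)
qed

lemma kids_join_trees_Cons:
  "i < length ts \<Longrightarrow> kids (join_trees ts) (Suc i # w) = kids (ts ! i) w"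
  by (simp add: kids_def)

lemma subtree_join_trees: "i < length ts \<Longrightarrow> subtree (join_trees ts) [Suc i] = ts ! i"
  by (simp add: subtree_def)

lemma root_subtrees_join_trees:
  assumes "\<forall>s\<in>set ts. [] \<in> s" shows "root_subtrees (join_trees ts) = ts"
  by (rule nth_equalityI)
     (auto simp: root_subtrees_def kids_join_trees_Nil[OF assms] subtree_join_trees)

lemma length_root_subtrees [simp]: "length (root_subtrees t) = kids t []"
  by (simp add: root_subtrees_def)

lemma nth_root_subtrees: "i < kids t [] \<Longrightarrow> root_subtrees t ! i = subtree t [Suc i]"
  by (simp add: root_subtrees_def)

lemma plane_tree_root_subtrees:
  assumes "plane_tree t" "s \<in> set (root_subtrees t)" shows "plane_tree s"
proof -
  obtain i where i: "i < kids t []" "s = subtree t [Suc i]"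
    using assms(2) by (auto simp: root_subtrees_def)
  have "[] @ [Suc i] \<in> t" using plane_tree_snoc_iff[OF assms(1) plane_tree_Nil[OF assms(1)]] i by auto
  then show ?thesis using plane_tree_subtree[OF assms(1)] i by simp
qed

lemma join_trees_root_subtrees:
  assumes "plane_tree t" shows "join_trees (root_subtrees t) = t"
proof safe
  fix u assume "u \<in> join_trees (root_subtrees t)"
  then show "u \<in> t"
    by (cases rule: in_join_treesE) (auto simp: nth_root_subtrees subtree_def plane_tree_Nil[OF assms])
next
  fix u assume u: "u \<in> t"
  show "u \<in> join_trees (root_subtrees t)"
  proof (cases u)
    case (Cons x w)
    then obtain i where x: "x = Suc i" using plane_tree_letters_ge_1[OF assms u] by (cases x) auto
    have "[] @ [x] \<in> t" using plane_tree_prefix_closed[OF assms u] Cons by simp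
    then have "x \<le> kids t []" using plane_tree_snoc_iff[OF assms plane_tree_Nil[OF assms]] by blast
    then show ?thesis using Cons x u by (auto simp: nth_root_subtrees subtree_def)
  qed simp
qed

lemma plane_tree_join_trees:
  assumes "\<forall>s\<in>set ts. plane_tree s" shows "plane_tree (join_trees ts)"
proof -
  have P: "\<And>i. i < length ts \<Longrightarrow> plane_tree (ts ! i)" using assms nth_mem by blast
  show ?thesis
  proof (rule plane_treeI)
    show "finite (join_trees ts)" using P plane_tree_finite by (simp add: join_trees_def)
    show "1 \<le> x" if "u \<in> join_trees ts" "x \<in> set u" for u x
      using that(1) by (cases rule: in_join_treesE) (use that(2) P plane_tree_letters_ge_1 in auto)
    show "butlast u \<in> join_trees ts" if "u \<in> join_trees ts" "u \<noteq> []" for u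
      using that(1)
    proof (cases rule: in_join_treesE)
      case (2 i w)
      then show ?thesis using plane_tree_butlast[OF P] by (cases "w = []") auto
    qed (use that(2) in simp)
    show "\<exists>k. \<forall>j. u @ [j] \<in> join_trees ts \<longleftrightarrow> 1 \<le> j \<and> j \<le> k" if "u \<in> join_trees ts" for u
      using that
    proof (cases rule: in_join_treesE)
      case 1
      have "[j] \<in> join_trees ts \<longleftrightarrow> 1 \<le> j \<and> j \<le> length ts" for j
        using P plane_tree_Nil by (cases j) auto
      then show ?thesis using 1 by auto
    next
      case (2 i w)
      then show ?thesis using plane_tree_children_interval[OF P] by simp
    qed
  qed simp
qed

lemma bij_betw_join_trees:
  "bij_betw join_trees {ts. set ts \<subseteq> Collect plane_tree \<inter> A} {t. plane_tree t \<and> set (root_subtrees t) \<subseteq> A}"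
proof (rule bij_betwI')
  fix x y assume "x \<in> {ts. set ts \<subseteq> Collect plane_tree \<inter> A}" "y \<in> {ts. set ts \<subseteq> Collect plane_tree \<inter> A}"
  then have "\<forall>s\<in>set x. [] \<in> s" "\<forall>s\<in>set y. [] \<in> s" using plane_tree_Nil by auto
  then show "(join_trees x = join_trees y) = (x = y)" using root_subtrees_join_trees by metis
next
  fix x assume x: "x \<in> {ts. set ts \<subseteq> Collect plane_tree \<inter> A}"
  then have "\<forall>s\<in>set x. [] \<in> s" using plane_tree_Nil by auto
  then show "join_trees x \<in> {t. plane_tree t \<and> set (root_subtrees t) \<subseteq> A}"
    using x plane_tree_join_trees root_subtrees_join_trees by auto
next
  fix y assume "y \<in> {t. plane_tree t \<and> set (root_subtrees t) \<subseteq> A}"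
  then show "\<exists>x\<in>{ts. set ts \<subseteq> Collect plane_tree \<inter> A}. y = join_trees x"
    using join_trees_root_subtrees plane_tree_root_subtrees by (intro bexI[of _ "root_subtrees y"]) auto
qed

lemma plane_tree_kids_Nil_0_iff: "plane_tree t \<Longrightarrow> kids t [] = 0 \<longleftrightarrow> t = {[]}"
proof
  assume t: "plane_tree t" "kids t [] = 0"
  then have "root_subtrees t = []" by (simp add: root_subtrees_def)
  then show "t = {[]}" using join_trees_root_subtrees[OF t(1)] by (simp add: join_trees_def)
qed (simp add: kids_def)

lemma plane_tree_singleton: "plane_tree {[]}"
  using plane_tree_join_trees[of "[]"] by (simp add: join_trees_def)

section \<open>Removing the first root subtree\<close>

lemma lex_less_irrefl: "\<not> lex_less u u"
  unfolding lex_less_def by (rule lexord_irreflexive) simp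

lemma lex_less_trans: "lex_less u v \<Longrightarrow> lex_less v w \<Longrightarrow> lex_less u w"
  unfolding lex_less_def by (rule lexord_trans) (auto simp: trans_def)

lemma strict_prefix_imp_lex_less: "prefix v u \<Longrightarrow> v \<noteq> u \<Longrightarrow> lex_less v u"
  unfolding lex_less_def prefix_def
  by (metis append.right_neutral lexord_append_rightI neq_Nil_conv)

lemma lex_less_snoc: "j < j' \<Longrightarrow> lex_less (p @ [j]) (p @ [j'])"
  unfolding lex_less_def by (rule lexord_append_leftI) simp

definition order_iso :: "(nat list \<Rightarrow> nat list) \<Rightarrow> nat list set \<Rightarrow> nat list set \<Rightarrow> bool" where
  "order_iso \<phi> D T \<longleftrightarrow> bij_betw \<phi> D T \<and> (\<forall>u\<in>D. \<forall>v\<in>D.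
     (lex_less u v \<longleftrightarrow> lex_less (\<phi> u) (\<phi> v)) \<and> (gen_le u v \<longleftrightarrow> gen_le (\<phi> u) (\<phi> v)))"

lemma reduced_def': "reduced T = (THE T'. plane_tree T' \<and> (\<exists>\<phi>. order_iso \<phi> (cut_first T) T'))"
  unfolding reduced_def order_iso_def ..

lemma order_iso_comp:
  assumes f: "order_iso f A B" and g: "order_iso g B C"
  shows "order_iso (g \<circ> f) A C"
proof -
  have fB: "f u \<in> B" if "u \<in> A" for u using f that by (auto simp: order_iso_def dest: bij_betwE)
  show ?thesis
    using f g bij_betw_trans[of f A B g C] fB unfolding order_iso_def by simp
qed

lemma order_iso_inv_into:
  assumes f: "order_iso f A B"
  shows "order_iso (inv_into A f) B A"
proof -
  have bij: "bij_betw f A B" using f by (simp add: order_iso_def)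
  have inv: "inv_into A f y \<in> A" "f (inv_into A f y) = y" if "y \<in> B" for y
    using bij_betwE[OF bij_betw_inv_into[OF bij]] bij_betw_inv_into_right[OF bij] that by auto
  show ?thesis
    unfolding order_iso_def
  proof (intro conjI ballI)
    show "bij_betw (inv_into A f) B A" by (rule bij_betw_inv_into[OF bij])
    fix u v assume "u \<in> B" "v \<in> B"
    then show "lex_less u v \<longleftrightarrow> lex_less (inv_into A f u) (inv_into A f v)"
      and "gen_le u v \<longleftrightarrow> gen_le (inv_into A f u) (inv_into A f v)"
      using f inv[of u] inv[of v] unfolding order_iso_def by metis+
  qed
qed

text \<open>An order isomorphism between plane trees is the identity; this makes the tree in the
  definition of reduced unique.\<close>

context
  fixes T1 T2 :: "nat list set" and \<psi> :: "nat list \<Rightarrow> nat list"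
  assumes T1: "plane_tree T1" and T2: "plane_tree T2" and iso: "order_iso \<psi> T1 T2"
begin

private lemma order_iso_surj: "y \<in> T2 \<Longrightarrow> \<exists>x\<in>T1. \<psi> x = y"
  using iso by (auto simp: order_iso_def bij_betw_def)

private lemma order_iso_inj: "u \<in> T1 \<Longrightarrow> v \<in> T1 \<Longrightarrow> \<psi> u = \<psi> v \<Longrightarrow> u = v"
  using iso by (auto simp: order_iso_def bij_betw_def dest: inj_onD)

private lemma order_iso_lex_iff: "u \<in> T1 \<Longrightarrow> v \<in> T1 \<Longrightarrow> lex_less (\<psi> u) (\<psi> v) \<longleftrightarrow> lex_less u v"
  using iso unfolding order_iso_def by blast

private lemma order_iso_prefix_iff: "u \<in> T1 \<Longrightarrow> v \<in> T1 \<Longrightarrow> prefix (\<psi> u) (\<psi> v) \<longleftrightarrow> prefix u v"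
  using iso unfolding order_iso_def gen_le_def by blast

text \<open>If every vertex lexicographically before p @ [j] is fixed, the image of p @ [j] lies
  below \<psi> p = p and is therefore a child of p.\<close>

private lemma order_iso_snoc_child:
  assumes u: "p @ [j] \<in> T1" and IH: "\<And>v. v \<in> T1 \<Longrightarrow> lex_less v (p @ [j]) \<Longrightarrow> \<psi> v = v"
  shows "\<exists>c. \<psi> (p @ [j]) = p @ [c] \<and> p @ [c] \<in> T2"
proof -
  have pT: "p \<in> T1" using plane_tree_prefix_closed[OF T1 u] by simp
  have psip: "\<psi> p = p" using IH[OF pT strict_prefix_imp_lex_less] by simp
  have "prefix p (\<psi> (p @ [j]))" using order_iso_prefix_iff[OF pT u] psip by simp
  moreover have "\<psi> (p @ [j]) \<noteq> p" using order_iso_inj[OF u pT] psip by auto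
  ultimately obtain c w where cw: "\<psi> (p @ [j]) = p @ c # w"
    by (metis append.right_neutral neq_Nil_conv prefix_def)
  have "\<psi> (p @ [j]) \<in> T2" using iso u by (auto simp: order_iso_def dest: bij_betwE)
  then have cT2: "p @ [c] \<in> T2" using plane_tree_prefix_closed[OF T2] cw by simp
  obtain x where x: "x \<in> T1" "\<psi> x = p @ [c]" using order_iso_surj[OF cT2] by blast
  have "prefix x (p @ [j])" using order_iso_prefix_iff[OF x(1) u] x(2) cw by simp
  then have "x = p @ [j] \<or> prefix x p" by (simp add: prefix_snoc)
  moreover have "\<not> prefix x p"
  proof
    assume xp: "prefix x p"
    then have "lex_less x (p @ [j])"
      by (intro strict_prefix_imp_lex_less) (auto dest: prefix_length_le)
    then have "x = p @ [c]" using IH x by simp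
    then show False using xp prefix_length_le by fastforce
  qed
  ultimately show ?thesis using x cT2 by blast
qed

text \<open>A smaller c would collide with the fixed sibling p @ [c], a larger one would leave no
  preimage for p @ [j].\<close>

private lemma order_iso_fixes_snoc:
  assumes u: "p @ [j] \<in> T1" and IH: "\<And>v. v \<in> T1 \<Longrightarrow> lex_less v (p @ [j]) \<Longrightarrow> \<psi> v = v"
  shows "\<psi> (p @ [j]) = p @ [j]"
proof -
  obtain c where psiu: "\<psi> (p @ [j]) = p @ [c]" and cT2: "p @ [c] \<in> T2"
    using order_iso_snoc_child[OF u IH] by blast
  have c1: "1 \<le> c" using plane_tree_letters_ge_1[OF T2 cT2] by simp
  have j1: "1 \<le> j" using plane_tree_letters_ge_1[OF T1 u] by simp
  have "\<not> c < j"
  proof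
    assume cj: "c < j"
    have cT: "p @ [c] \<in> T1" using plane_tree_left_sibling[OF T1 u c1] cj by simp
    then have "\<psi> (p @ [c]) = \<psi> (p @ [j])" using IH[OF cT lex_less_snoc[OF cj]] psiu by simp
    then have "p @ [c] = p @ [j]" using order_iso_inj[OF cT u] by blast
    then show False using cj by simp
  qed
  moreover have "\<not> j < c"
  proof
    assume jc: "j < c"
    have jT2: "p @ [j] \<in> T2" using plane_tree_left_sibling[OF T2 cT2 j1] jc by simp
    obtain y where y: "y \<in> T1" "\<psi> y = p @ [j]" using order_iso_surj[OF jT2] by blast
    have "lex_less (\<psi> y) (\<psi> (p @ [j]))" using lex_less_snoc[OF jc] y psiu by simp
    then have "lex_less y (p @ [j])" using order_iso_lex_iff[OF y(1) u] by simp
    then have "y = p @ [j]" using IH y by simp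
    then show False using y psiu jc by simp
  qed
  ultimately show ?thesis using psiu by simp
qed

lemma plane_tree_order_iso_id: "u \<in> T1 \<Longrightarrow> \<psi> u = u"
proof (induction "card {v\<in>T1. lex_less v u}" arbitrary: u rule: less_induct)
  case less
  have IH: "\<psi> v = v" if v: "v \<in> T1" "lex_less v u" for v
  proof -
    have "{w\<in>T1. lex_less w v} \<subset> {w\<in>T1. lex_less w u}"
      using v lex_less_trans lex_less_irrefl by blast
    then have "card {w\<in>T1. lex_less w v} < card {w\<in>T1. lex_less w u}"
      using plane_tree_finite[OF T1] by (intro psubset_card_mono) auto
    then show ?thesis using less.hyps v by blast
  qed
  show "\<psi> u = u"
  proof (cases u rule: rev_cases)
    case Nil
    obtain x where x: "x \<in> T1" "\<psi> x = []" using order_iso_surj plane_tree_Nil[OF T2] by blast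
    have "prefix (\<psi> []) (\<psi> x)" using order_iso_prefix_iff[OF plane_tree_Nil[OF T1] x(1)] by simp
    then show ?thesis using x Nil by simp
  next
    case (snoc p j)
    show ?thesis unfolding snoc by (rule order_iso_fixes_snoc) (use IH less.prems snoc in auto)
  qed
qed

end

lemma reduced_eqI:
  assumes T': "plane_tree T'" and iso: "order_iso \<phi> (cut_first T) T'"
  shows "reduced T = T'"
  unfolding reduced_def'
proof (rule the_equality)
  fix T'' assume "plane_tree T'' \<and> (\<exists>\<phi>'. order_iso \<phi>' (cut_first T) T'')"
  then obtain \<phi>' where T'': "plane_tree T''" and iso': "order_iso \<phi>' (cut_first T) T''" by blast
  let ?\<psi> = "\<phi>' \<circ> inv_into (cut_first T) \<phi>"
  have \<psi>: "order_iso ?\<psi> T' T''" by (rule order_iso_comp[OF order_iso_inv_into[OF iso] iso'])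
  then have "T'' = ?\<psi> ` T'" by (simp add: order_iso_def bij_betw_def)
  also have "\<dots> = T'" using plane_tree_order_iso_id[OF T' T'' \<psi>] by simp
  finally show "T'' = T'" .
qed (use T' iso in blast)

definition dec_head :: "nat list \<Rightarrow> nat list" where
  "dec_head u = (case u of [] \<Rightarrow> [] | x # w \<Rightarrow> (x - 1) # w)"

lemma dec_head_Nil [simp]: "dec_head [] = []"
  and dec_head_Cons [simp]: "dec_head (x # w) = (x - 1) # w"
  by (simp_all add: dec_head_def)

lemma in_cut_first_join_trees_iff:
  "u \<in> cut_first (join_trees (s # ts)) \<longleftrightarrow>
    u = [] \<or> (\<exists>i w. u = Suc (Suc i) # w \<and> i < length ts \<and> w \<in> ts ! i)"
proof
  assume "u \<in> cut_first (join_trees (s # ts))"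
  then have u: "u \<in> join_trees (s # ts)" "\<not> (\<exists>w. u = 1 # w)" by (auto simp: cut_first_def)
  from u(1) show "u = [] \<or> (\<exists>i w. u = Suc (Suc i) # w \<and> i < length ts \<and> w \<in> ts ! i)"
  proof (cases rule: in_join_treesE)
    case (2 i w)
    then obtain i' where "i = Suc i'" using u(2) by (cases i) auto
    then show ?thesis using 2 by auto
  qed simp
qed (auto simp: cut_first_def)

lemma order_iso_dec_head_cut_first:
  "order_iso dec_head (cut_first (join_trees (s # ts))) (join_trees ts)"
proof -
  have "bij_betw dec_head (cut_first (join_trees (s # ts))) (join_trees ts)"
  proof (rule bij_betwI')
    fix y assume "y \<in> join_trees ts"
    then show "\<exists>x\<in>cut_first (join_trees (s # ts)). y = dec_head x"
    proof (cases rule: in_join_treesE)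
      case 1 then show ?thesis by (intro bexI[of _ "[]"]) (simp_all add: in_cut_first_join_trees_iff)
    next
      case (2 i w)
      then show ?thesis
        by (intro bexI[of _ "Suc (Suc i) # w"]) (simp_all add: in_cut_first_join_trees_iff)
    qed
  next
    fix x y assume "x \<in> cut_first (join_trees (s # ts))" "y \<in> cut_first (join_trees (s # ts))"
    then show "(dec_head x = dec_head y) = (x = y)" unfolding in_cut_first_join_trees_iff by auto
  next
    fix x assume "x \<in> cut_first (join_trees (s # ts))"
    then show "dec_head x \<in> join_trees ts" unfolding in_cut_first_join_trees_iff by auto
  qed
  moreover have "(lex_less u v \<longleftrightarrow> lex_less (dec_head u) (dec_head v)) \<and>
      (gen_le u v \<longleftrightarrow> gen_le (dec_head u) (dec_head v))"
    if "u \<in> cut_first (join_trees (s # ts))" "v \<in> cut_first (join_trees (s # ts))" for u v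
  proof -
    have "u = [] \<or> 2 \<le> hd u" "v = [] \<or> 2 \<le> hd v"
      using that unfolding in_cut_first_join_trees_iff by auto
    then show ?thesis unfolding lex_less_def gen_le_def by (cases u; cases v) auto
  qed
  ultimately show ?thesis unfolding order_iso_def by blast
qed

lemma reduced_join_trees:
  "\<forall>x\<in>set ts. plane_tree x \<Longrightarrow> reduced (join_trees (s # ts)) = join_trees ts"
  by (rule reduced_eqI[OF plane_tree_join_trees order_iso_dec_head_cut_first])

definition graft_first :: "nat list set \<Rightarrow> nat list set \<Rightarrow> nat list set" where
  "graft_first s r = join_trees (s # root_subtrees r)"

lemma graft_first_simps:
  assumes s: "plane_tree s" and r: "plane_tree r"
  shows plane_tree_graft_first: "plane_tree (graft_first s r)"
    and kids_graft_first: "kids (graft_first s r) [] = Suc (kids r [])"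
    and subtree_graft_first: "subtree (graft_first s r) [1] = s"
    and reduced_graft_first: "reduced (graft_first s r) = r"
proof -
  have sub: "\<forall>x\<in>set (root_subtrees r). plane_tree x" using plane_tree_root_subtrees[OF r] by blast
  then have all: "\<forall>x\<in>set (s # root_subtrees r). plane_tree x" using s by simp
  show "plane_tree (graft_first s r)" unfolding graft_first_def using plane_tree_join_trees[OF all] .
  show "kids (graft_first s r) [] = Suc (kids r [])" unfolding graft_first_def
    using kids_join_trees_Nil all plane_tree_Nil by simp
  show "subtree (graft_first s r) [1] = s" unfolding graft_first_def
    using subtree_join_trees[of 0 "s # root_subtrees r"] by simp
  show "reduced (graft_first s r) = r" unfolding graft_first_def
    using reduced_join_trees[OF sub] join_trees_root_subtrees[OF r] by simp
qed

lemma bij_betw_graft_first: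
  "bij_betw (case_prod graft_first) (Collect plane_tree \<times> Collect plane_tree)
    {t. plane_tree t \<and> 1 \<le> kids t []}"
proof (rule bij_betwI')
  fix t assume "t \<in> {t. plane_tree t \<and> 1 \<le> kids t []}"
  then have t: "plane_tree t" "1 \<le> kids t []" by auto
  then obtain s rest where st: "root_subtrees t = s # rest"
    by (cases "root_subtrees t") (auto simp flip: length_root_subtrees)
  then have s: "plane_tree s" and rest: "\<forall>x\<in>set rest. plane_tree x"
    using plane_tree_root_subtrees[OF t(1)] by auto
  have "root_subtrees (join_trees rest) = rest"
    using root_subtrees_join_trees rest plane_tree_Nil by blast
  then have "graft_first s (join_trees rest) = t"
    unfolding graft_first_def using join_trees_root_subtrees[OF t(1)] st by simp
  then show "\<exists>x\<in>Collect plane_tree \<times> Collect plane_tree. t = case_prod graft_first x"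
    using s plane_tree_join_trees[OF rest] by force
next
  fix x y assume "x \<in> Collect plane_tree \<times> Collect plane_tree" "y \<in> Collect plane_tree \<times> Collect plane_tree"
  then obtain s r s' r' where "x = (s, r)" "y = (s', r')"
    "plane_tree s" "plane_tree r" "plane_tree s'" "plane_tree r'" by auto
  then show "(case_prod graft_first x = case_prod graft_first y) = (x = y)"
    using subtree_graft_first reduced_graft_first by (metis case_prod_conv)
qed (use plane_tree_graft_first kids_graft_first in auto)

section \<open>Sums over counting measures\<close>

lemma nn_integral_count_space_Times:
  fixes F :: "'a \<Rightarrow> ennreal" and G :: "'b \<Rightarrow> ennreal"
  shows "(\<integral>\<^sup>+p. F (fst p) * G (snd p) \<partial>count_space (A \<times> C)) = (\<integral>\<^sup>+x. F x \<partial>count_space A) * (\<integral>\<^sup>+y. G y \<partial>count_space C)"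
proof -
  have "(\<integral>\<^sup>+p. F (fst p) * G (snd p) \<partial>count_space (A \<times> C)) =
      (\<integral>\<^sup>+p. F (fst p) * G (snd p) * indicator (A \<times> C) p \<partial>count_space UNIV)"
    by (rule nn_integral_count_space_indicator) simp
  also have "\<dots> = (\<integral>\<^sup>+x. \<integral>\<^sup>+y. F x * G y * indicator (A \<times> C) (x, y) \<partial>count_space UNIV \<partial>count_space UNIV)"
    by (rule nn_integral_fst_count_space[symmetric, where f="\<lambda>p. F (fst p) * G (snd p) * indicator (A \<times> C) p", simplified])
  also have "\<dots> = (\<integral>\<^sup>+x. (F x * indicator A x) * (\<integral>\<^sup>+y. G y * indicator C y \<partial>count_space UNIV) \<partial>count_space UNIV)"
  proof (rule nn_integral_cong)
    fix x
    have "(\<integral>\<^sup>+y. F x * G y * indicator (A \<times> C) (x, y) \<partial>count_space UNIV) =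
        (\<integral>\<^sup>+y. (F x * indicator A x) * (G y * indicator C y) \<partial>count_space UNIV)"
      by (rule nn_integral_cong) (simp add: indicator_def)
    also have "\<dots> = (F x * indicator A x) * (\<integral>\<^sup>+y. G y * indicator C y \<partial>count_space UNIV)"
      by (rule nn_integral_cmult) simp
    finally show "(\<integral>\<^sup>+y. F x * G y * indicator (A \<times> C) (x, y) \<partial>count_space UNIV) =
        (F x * indicator A x) * (\<integral>\<^sup>+y. G y * indicator C y \<partial>count_space UNIV)" .
  qed
  also have "\<dots> = (\<integral>\<^sup>+x. F x * indicator A x \<partial>count_space UNIV) * (\<integral>\<^sup>+y. G y * indicator C y \<partial>count_space UNIV)"
    by (rule nn_integral_multc) simp
  also have "\<dots> = (\<integral>\<^sup>+x. F x \<partial>count_space A) * (\<integral>\<^sup>+y. G y \<partial>count_space C)"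
    by (simp add: nn_integral_count_space_indicator)
  finally show ?thesis .
qed

lemma nn_integral_count_space_partition_nat:
  fixes H :: "'a \<Rightarrow> ennreal" and h :: "'a \<Rightarrow> nat"
  shows "(\<integral>\<^sup>+x. H x \<partial>count_space X) = (\<Sum>n. \<integral>\<^sup>+x. H x \<partial>count_space {x\<in>X. h x = n})"
proof -
  have "(\<Sum>n. \<integral>\<^sup>+x. H x \<partial>count_space {x\<in>X. h x = n}) =
      (\<Sum>n. \<integral>\<^sup>+x. H x * indicator {x\<in>X. h x = n} x \<partial>count_space UNIV)"
    by (simp add: nn_integral_count_space_indicator)
  also have "\<dots> = (\<integral>\<^sup>+x. (\<Sum>n. H x * indicator {x\<in>X. h x = n} x) \<partial>count_space UNIV)"
    by (rule nn_integral_suminf[symmetric]) simp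
  also have "\<dots> = (\<integral>\<^sup>+x. H x * indicator X x \<partial>count_space UNIV)"
  proof (rule nn_integral_cong)
    fix x
    have "(\<Sum>n. H x * indicator {x\<in>X. h x = n} x) = (\<Sum>n\<in>{h x}. H x * indicator {x\<in>X. h x = n} x)"
      by (rule suminf_finite) (auto simp: indicator_def)
    also have "\<dots> = H x * indicator X x" by (simp add: indicator_def)
    finally show "(\<Sum>n. H x * indicator {x\<in>X. h x = n} x) = H x * indicator X x" .
  qed
  also have "\<dots> = (\<integral>\<^sup>+x. H x \<partial>count_space X)"
    by (simp add: nn_integral_count_space_indicator)
  finally show ?thesis by simp
qed

lemma nn_integral_lists_length:
  fixes f :: "'a \<Rightarrow> ennreal"
  shows "(\<integral>\<^sup>+ts. prod_list (map f ts) \<partial>count_space {ts. set ts \<subseteq> B \<and> length ts = n}) = (\<integral>\<^sup>+x. f x \<partial>count_space B) ^ n"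
proof (induction n)
  case 0
  have "{ts. set ts \<subseteq> B \<and> length ts = 0} = {[]}" by auto
  then show ?case by (simp add: nn_integral_count_space_finite)
next
  case (Suc n)
  let ?L = "\<lambda>n. {ts. set ts \<subseteq> B \<and> length ts = n}"
  have bij: "bij_betw (\<lambda>p. fst p # snd p) (B \<times> ?L n) (?L (Suc n))"
  proof (rule bij_betwI')
    fix x y assume "x \<in> B \<times> ?L n" "y \<in> B \<times> ?L n"
    then show "(fst x # snd x = fst y # snd y) = (x = y)" by (auto simp: prod_eq_iff)
  next
    fix x assume "x \<in> B \<times> ?L n" then show "fst x # snd x \<in> ?L (Suc n)" by auto
  next
    fix y assume "y \<in> ?L (Suc n)"
    then obtain a ys where "y = a # ys" "a \<in> B" "ys \<in> ?L n" by (cases y) auto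
    then show "\<exists>x\<in>B \<times> ?L n. y = fst x # snd x" by (intro bexI[of _ "(a, ys)"]) auto
  qed
  have "(\<integral>\<^sup>+ts. prod_list (map f ts) \<partial>count_space (?L (Suc n))) =
      (\<integral>\<^sup>+p. prod_list (map f (fst p # snd p)) \<partial>count_space (B \<times> ?L n))"
    by (rule nn_integral_bij_count_space[OF bij, symmetric])
  also have "\<dots> = (\<integral>\<^sup>+p. f (fst p) * prod_list (map f (snd p)) \<partial>count_space (B \<times> ?L n))" by simp
  also have "\<dots> = (\<integral>\<^sup>+x. f x \<partial>count_space B) * (\<integral>\<^sup>+ts. prod_list (map f ts) \<partial>count_space (?L n))"
    by (rule nn_integral_count_space_Times)
  finally show ?case using Suc.IH by simp
qed

lemma nn_integral_lists:
  fixes f :: "'a \<Rightarrow> ennreal" and \<rho> :: "nat \<Rightarrow> ennreal"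
  shows "(\<integral>\<^sup>+ts. \<rho> (length ts) * prod_list (map f ts) \<partial>count_space {ts. set ts \<subseteq> B}) =
    (\<Sum>n. \<rho> n * (\<integral>\<^sup>+x. f x \<partial>count_space B) ^ n)"
proof -
  have "(\<integral>\<^sup>+ts. \<rho> (length ts) * prod_list (map f ts) \<partial>count_space {ts. set ts \<subseteq> B}) =
     (\<Sum>n. \<integral>\<^sup>+ts. \<rho> (length ts) * prod_list (map f ts) \<partial>count_space {ts\<in>{ts. set ts \<subseteq> B}. length ts = n})"
    by (rule nn_integral_count_space_partition_nat)
  also have "\<dots> = (\<Sum>n. \<rho> n * (\<integral>\<^sup>+x. f x \<partial>count_space B) ^ n)"
  proof (rule suminf_cong)
    fix n
    have "(\<integral>\<^sup>+ts. \<rho> (length ts) * prod_list (map f ts) \<partial>count_space {ts\<in>{ts. set ts \<subseteq> B}. length ts = n})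
      = (\<integral>\<^sup>+ts. \<rho> n * prod_list (map f ts) \<partial>count_space {ts. set ts \<subseteq> B \<and> length ts = n})"
    proof -
      have eq: "{ts \<in> {ts. set ts \<subseteq> B}. length ts = n} = {ts. set ts \<subseteq> B \<and> length ts = n}" by simp
      show ?thesis unfolding eq by (intro nn_integral_cong) simp
    qed
    also have "\<dots> = \<rho> n * (\<integral>\<^sup>+ts. prod_list (map f ts) \<partial>count_space {ts. set ts \<subseteq> B \<and> length ts = n})"
      by (rule nn_integral_cmult) simp
    finally show "(\<integral>\<^sup>+ts. \<rho> (length ts) * prod_list (map f ts) \<partial>count_space {ts\<in>{ts. set ts \<subseteq> B}. length ts = n})
      = \<rho> n * (\<integral>\<^sup>+x. f x \<partial>count_space B) ^ n" by (simp add: nn_integral_lists_length)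
  qed
  finally show ?thesis .
qed

section \<open>Total masses of the Galton--Watson laws\<close>

lemma gw_weight_nonneg: "0 \<le> gw_weight mu t"
  unfolding gw_weight_def by (rule prod_nonneg) simp

lemma ennreal_prod_list:
  "(\<And>x. x \<in> set xs \<Longrightarrow> 0 \<le> f x) \<Longrightarrow> ennreal (prod_list (map f xs)) = prod_list (map (\<lambda>x. ennreal (f x)) xs)"
proof (induction xs)
  case (Cons a xs)
  have "0 \<le> prod_list (map f xs)" using Cons.prems by (intro prod_list_nonneg) auto
  then show ?case using Cons by (simp add: ennreal_mult)
qed simp

lemma gw_weight_join_trees:
  assumes "\<forall>s\<in>set ts. plane_tree s"
  shows "gw_weight mu (join_trees ts) = pmf mu (length ts) * prod_list (map (gw_weight mu) ts)"
proof -
  let ?U = "\<Union>i<length ts. (\<lambda>w. Suc i # w) ` (ts ! i)"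
  have fin: "\<forall>i<length ts. finite (ts ! i)" using assms plane_tree_finite nth_mem by blast
  have "gw_weight mu (join_trees ts) =
      pmf mu (kids (join_trees ts) []) * (\<Prod>u\<in>?U. pmf mu (kids (join_trees ts) u))"
    unfolding gw_weight_def join_trees_def[of ts]
  proof (subst prod.insert)
    show "finite ?U" using fin by simp
    show "[] \<notin> ?U" by blast
  qed simp
  also have "kids (join_trees ts) [] = length ts"
    using kids_join_trees_Nil assms plane_tree_Nil by blast
  also have "(\<Prod>u\<in>?U. pmf mu (kids (join_trees ts) u)) =
      (\<Prod>i<length ts. \<Prod>u\<in>(\<lambda>w. Suc i # w) ` (ts ! i). pmf mu (kids (join_trees ts) u))"
    by (rule prod.UNION_disjoint) (use fin in \<open>auto simp: disjoint_family_on_def\<close>)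
  also have "\<dots> = (\<Prod>i<length ts. gw_weight mu (ts ! i))"
  proof (rule prod.cong[OF refl])
    fix i assume "i \<in> {..<length ts}"
    then show "(\<Prod>u\<in>(\<lambda>w. Suc i # w) ` (ts ! i). pmf mu (kids (join_trees ts) u)) = gw_weight mu (ts ! i)"
      by (subst prod.reindex) (auto simp: inj_on_def kids_join_trees_Cons gw_weight_def)
  qed
  also have "\<dots> = prod_list (map (gw_weight mu) ts)"
    by (subst prod.list_conv_set_nth) (simp add: atLeast0LessThan)
  finally show ?thesis .
qed

lemma prod_list_gw_weight_nonneg: "0 \<le> prod_list (map (gw_weight mu) ts)"
  by (rule prod_list_nonneg) (auto simp: gw_weight_nonneg)

lemma ennreal_prod_list_gw_weight:
  "ennreal (prod_list (map (gw_weight mu) ts)) = prod_list (map (\<lambda>x. ennreal (gw_weight mu x)) ts)"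
  using ennreal_prod_list[of ts "gw_weight mu"] gw_weight_nonneg by blast

lemma ennreal_gw_weight_join_trees:
  "\<forall>s\<in>set ts. plane_tree s \<Longrightarrow> ennreal (gw_weight mu (join_trees ts)) =
    ennreal (pmf mu (length ts)) * prod_list (map (\<lambda>x. ennreal (gw_weight mu x)) ts)"
  by (simp add: gw_weight_join_trees ennreal_mult prod_list_gw_weight_nonneg ennreal_prod_list_gw_weight)

definition spine_weight :: "nat pmf \<Rightarrow> nat list set \<Rightarrow> real" where
  "spine_weight mu t = measure_pmf.prob mu {Suc (kids t [])..} *
     (\<Prod>i\<in>{1..kids t []}. gw_weight mu (subtree t [i]))"

lemma ennreal_spine_weight_join_trees:
  assumes "\<forall>s\<in>set ts. plane_tree s"
  shows "ennreal (spine_weight mu (join_trees ts)) =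
    ennreal (measure_pmf.prob mu {Suc (length ts)..}) * prod_list (map (\<lambda>x. ennreal (gw_weight mu x)) ts)"
proof -
  have k: "kids (join_trees ts) [] = length ts"
    using kids_join_trees_Nil assms plane_tree_Nil by blast
  have "(\<Prod>i\<in>{1..length ts}. gw_weight mu (subtree (join_trees ts) [i])) =
      (\<Prod>i<length ts. gw_weight mu (subtree (join_trees ts) [Suc i]))"
  proof -
    have "{1..length ts} = Suc ` {..<length ts}" by (simp add: image_Suc_lessThan)
    then show ?thesis by (simp add: prod.reindex)
  qed
  also have "\<dots> = prod_list (map (gw_weight mu) ts)"
    by (subst prod.list_conv_set_nth) (simp add: subtree_join_trees atLeast0LessThan)
  finally show ?thesis unfolding spine_weight_def k
    by (simp add: ennreal_mult prod_list_gw_weight_nonneg ennreal_prod_list_gw_weight)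
qed

lemma nn_integral_trees_by_root_subtrees:
  fixes \<rho> :: "nat \<Rightarrow> ennreal"
  assumes F: "\<And>ts. \<forall>s\<in>set ts. plane_tree s \<Longrightarrow>
    F (join_trees ts) = \<rho> (length ts) * prod_list (map (\<lambda>x. ennreal (gw_weight mu x)) ts)"
  shows "(\<integral>\<^sup>+t. F t \<partial>count_space {t. plane_tree t \<and> set (root_subtrees t) \<subseteq> A}) =
    (\<Sum>n. \<rho> n * (\<integral>\<^sup>+x. ennreal (gw_weight mu x) \<partial>count_space (Collect plane_tree \<inter> A)) ^ n)"
proof -
  have "(\<integral>\<^sup>+t. F t \<partial>count_space {t. plane_tree t \<and> set (root_subtrees t) \<subseteq> A}) =
      (\<integral>\<^sup>+ts. F (join_trees ts) \<partial>count_space {ts. set ts \<subseteq> Collect plane_tree \<inter> A})"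
    by (rule nn_integral_bij_count_space[OF bij_betw_join_trees, symmetric])
  also have "\<dots> = (\<integral>\<^sup>+ts. \<rho> (length ts) * prod_list (map (\<lambda>x. ennreal (gw_weight mu x)) ts)
      \<partial>count_space {ts. set ts \<subseteq> Collect plane_tree \<inter> A})"
    by (rule nn_integral_cong) (use F in auto)
  also have "\<dots> = (\<Sum>n. \<rho> n * (\<integral>\<^sup>+x. ennreal (gw_weight mu x) \<partial>count_space (Collect plane_tree \<inter> A)) ^ n)"
    by (rule nn_integral_lists)
  finally show ?thesis .
qed

definition pgf :: "nat pmf \<Rightarrow> ennreal \<Rightarrow> ennreal" where
  "pgf mu x = (\<Sum>n. ennreal (pmf mu n) * x ^ n)"

definition trees_height_less :: "nat \<Rightarrow> nat list set set" where
  "trees_height_less h = {t. plane_tree t \<and> (\<forall>u\<in>t. length u < h)}"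

lemma suminf_ennreal_pmf: "(\<Sum>n. ennreal (pmf mu n)) = 1"
proof -
  have "(\<Sum>n. ennreal (pmf mu n)) = (\<integral>\<^sup>+n. ennreal (pmf mu n) \<partial>count_space UNIV)"
    by (rule nn_integral_count_space_nat[symmetric])
  also have "\<dots> = 1" by (simp add: nn_integral_pmf measure_pmf.emeasure_space_1)
  finally show ?thesis .
qed

lemma pgf_1: "pgf mu 1 = 1"
  unfolding pgf_def using suminf_ennreal_pmf by simp

lemma pgf_mono: "x \<le> y \<Longrightarrow> pgf mu x \<le> pgf mu y"
  unfolding pgf_def by (intro suminf_le mult_left_mono power_mono) simp_all

lemma nn_integral_gw_weight_pgf:
  "(\<integral>\<^sup>+t. ennreal (gw_weight mu t) \<partial>count_space {t. plane_tree t \<and> set (root_subtrees t) \<subseteq> A}) =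
    pgf mu (\<integral>\<^sup>+x. ennreal (gw_weight mu x) \<partial>count_space (Collect plane_tree \<inter> A))"
  unfolding pgf_def by (rule nn_integral_trees_by_root_subtrees) (rule ennreal_gw_weight_join_trees)

lemma trees_height_less_Suc:
  "{t. plane_tree t \<and> set (root_subtrees t) \<subseteq> trees_height_less h} = trees_height_less (Suc h)"
proof safe
  fix t assume t: "plane_tree t" "set (root_subtrees t) \<subseteq> trees_height_less h"
  have "length u < Suc h" if "u \<in> t" for u
  proof -
    have "u \<in> join_trees (root_subtrees t)" using join_trees_root_subtrees[OF t(1)] that by simp
    then show ?thesis
    proof (cases rule: in_join_treesE)
      case (2 i w)
      then have "root_subtrees t ! i \<in> trees_height_less h" using t(2) nth_mem by blast
      then show ?thesis using 2 by (simp add: trees_height_less_def)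
    qed simp
  qed
  then show "t \<in> trees_height_less (Suc h)" using t(1) by (simp add: trees_height_less_def)
next
  fix t assume "t \<in> trees_height_less (Suc h)"
  then have t: "plane_tree t" "\<forall>u\<in>t. length u < Suc h" by (auto simp: trees_height_less_def)
  then show "plane_tree t" by simp
  fix s assume s: "s \<in> set (root_subtrees t)"
  then obtain i where i: "i < length (root_subtrees t)" "s = root_subtrees t ! i"
    by (metis in_set_conv_nth)
  have "length w < h" if "w \<in> s" for w
  proof -
    have "Suc i # w \<in> join_trees (root_subtrees t)" using i that by simp
    then have "Suc i # w \<in> t" using join_trees_root_subtrees[OF t(1)] by simp
    then show ?thesis using t(2) by fastforce
  qed
  then show "s \<in> trees_height_less h"
    using plane_tree_root_subtrees[OF t(1) s] by (simp add: trees_height_less_def)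
qed

lemma nn_integral_gw_weight_height_le_1:
  "(\<integral>\<^sup>+x. ennreal (gw_weight mu x) \<partial>count_space (trees_height_less h)) \<le> 1"
proof (induction h)
  case 0
  have "trees_height_less 0 = {}" by (auto simp: trees_height_less_def dest: plane_tree_Nil)
  then show ?case by (simp add: nn_integral_count_space_finite)
next
  case (Suc h)
  have "Collect plane_tree \<inter> trees_height_less h = trees_height_less h"
    by (auto simp: trees_height_less_def)
  then have "(\<integral>\<^sup>+x. ennreal (gw_weight mu x) \<partial>count_space (trees_height_less (Suc h))) =
      pgf mu (\<integral>\<^sup>+x. ennreal (gw_weight mu x) \<partial>count_space (trees_height_less h))"
    using nn_integral_gw_weight_pgf[where mu=mu and A="trees_height_less h"] trees_height_less_Suc[of h] by simp
  also have "\<dots> \<le> pgf mu 1" using pgf_mono Suc.IH by blast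
  finally show ?case using pgf_1 by simp
qed

lemma plane_tree_in_trees_height_less: "plane_tree t \<Longrightarrow> \<exists>h. t \<in> trees_height_less h"
proof -
  assume t: "plane_tree t"
  have "finite (length ` t)" using plane_tree_finite[OF t] by simp
  then obtain h where "\<forall>x\<in>length ` t. x < h" using finite_nat_set_iff_bounded by blast
  then show ?thesis using t by (auto simp: trees_height_less_def)
qed

lemma nn_integral_gw_weight_le_1:
  "(\<integral>\<^sup>+x. ennreal (gw_weight mu x) \<partial>count_space (Collect plane_tree)) \<le> 1"
proof -
  let ?f = "\<lambda>h x. ennreal (gw_weight mu x) * indicator (trees_height_less h) x"
  have inc: "incseq ?f"
    by (intro incseq_SucI le_funI mult_left_mono) (auto simp: indicator_def trees_height_less_def)
  have sup: "(SUP h. ?f h x) = ennreal (gw_weight mu x) * indicator (Collect plane_tree) x" for x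
  proof (cases "plane_tree x")
    case True
    then obtain h0 where h0: "x \<in> trees_height_less h0" using plane_tree_in_trees_height_less by blast
    show ?thesis
    proof (rule antisym)
      show "(SUP h. ?f h x) \<le> ennreal (gw_weight mu x) * indicator (Collect plane_tree) x"
        using True by (intro SUP_least) (auto simp: indicator_def)
      have "?f h0 x \<le> (SUP h. ?f h x)" by (rule SUP_upper) simp
      then show "ennreal (gw_weight mu x) * indicator (Collect plane_tree) x \<le> (SUP h. ?f h x)"
        using h0 True by (simp add: indicator_def)
    qed
  next
    case False
    then have "x \<notin> trees_height_less h" for h by (simp add: trees_height_less_def)
    then show ?thesis using False by (simp add: indicator_def)
  qed
  have "(\<integral>\<^sup>+x. ennreal (gw_weight mu x) \<partial>count_space (Collect plane_tree)) =
      (\<integral>\<^sup>+x. ennreal (gw_weight mu x) * indicator (Collect plane_tree) x \<partial>count_space UNIV)"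
    by (rule nn_integral_count_space_indicator) simp
  also have "\<dots> = (\<integral>\<^sup>+x. (SUP h. ?f h x) \<partial>count_space UNIV)" using sup by simp
  also have "\<dots> = (SUP h. \<integral>\<^sup>+x. ?f h x \<partial>count_space UNIV)"
    by (rule nn_integral_monotone_convergence_SUP[OF inc]) simp
  also have "\<dots> \<le> 1"
  proof (rule SUP_least)
    fix h
    have "(\<integral>\<^sup>+x. ?f h x \<partial>count_space UNIV) =
        (\<integral>\<^sup>+x. ennreal (gw_weight mu x) \<partial>count_space (trees_height_less h))"
      by (rule nn_integral_count_space_indicator[symmetric]) simp
    then show "(\<integral>\<^sup>+x. ?f h x \<partial>count_space UNIV) \<le> 1"
      using nn_integral_gw_weight_height_le_1 by simp
  qed
  finally show ?thesis .
qed

lemma nn_integral_gw_weight_fixed_point: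
  "pgf mu (\<integral>\<^sup>+x. ennreal (gw_weight mu x) \<partial>count_space (Collect plane_tree)) =
    (\<integral>\<^sup>+x. ennreal (gw_weight mu x) \<partial>count_space (Collect plane_tree))"
proof -
  have e: "{t. plane_tree t \<and> set (root_subtrees t) \<subseteq> UNIV} = Collect plane_tree" by simp
  from nn_integral_gw_weight_pgf[where mu=mu and A=UNIV]
  show ?thesis unfolding e Int_UNIV_right by (rule sym)
qed

lemma strict_Bernoulli_inequality:
  fixes w :: real
  assumes "0 \<le> w" "w < 1" "2 \<le> k"
  shows "1 + real k * (w - 1) < w ^ k"
proof -
  obtain m where k: "k = Suc m" and m: "1 \<le> m" using assms(3) by (cases k) auto
  have "1 + real k * (w - 1) < (1 + real m * (w - 1)) * w"
  proof -
    have "(1 + real m * (w - 1)) * w - (1 + real k * (w - 1)) = real m * (w - 1)^2"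
      using k by (simp add: algebra_simps power2_eq_square)
    moreover have "0 < real m * (w - 1)^2" using m assms(2) by simp
    ultimately show ?thesis by linarith
  qed
  also have "\<dots> \<le> w ^ m * w"
  proof (rule mult_right_mono)
    show "1 + real m * (w - 1) \<le> w ^ m" using Bernoulli_inequality[of "w - 1" m] assms(1) by simp
  qed (use assms(1) in simp)
  also have "\<dots> = w ^ k" using k by (simp add: mult.commute)
  finally show ?thesis .
qed

lemma summable_pmf: "summable (pmf mu)" and suminf_pmf: "suminf (pmf mu) = 1"
proof -
  have ne: "(\<Sum>n. ennreal (pmf mu n)) \<noteq> top" using suminf_ennreal_pmf by simp
  show s: "summable (pmf mu)" by (rule summable_suminf_not_top) (simp_all add: ne)
  have "ennreal (suminf (pmf mu)) = 1"
    using suminf_ennreal2[of "pmf mu", OF pmf_nonneg s] suminf_ennreal_pmf by simp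
  then show "suminf (pmf mu) = 1" by simp
qed

lemma critical_ex_pmf_ge_2:
  assumes critical: "(\<lambda>k. real k * pmf mu k) sums 1" and nondeg: "pmf mu 1 \<noteq> 1"
  shows "\<exists>k\<ge>2. 0 < pmf mu k"
proof (rule ccontr)
  assume "\<not> ?thesis"
  then have z: "\<And>k. 2 \<le> k \<Longrightarrow> pmf mu k = 0" using pmf_nonneg by (metis less_eq_real_def)
  have "(\<lambda>k. real k * pmf mu k) sums (\<Sum>k\<in>{1}. real k * pmf mu k)"
  proof (rule sums_finite)
    fix k assume "k \<notin> {1::nat}"
    then have "k = 0 \<or> 2 \<le> k" by auto
    then show "real k * pmf mu k = 0" using z by auto
  qed simp
  then have "pmf mu 1 = 1" using critical sums_unique2 by fastforce
  then show False using nondeg by simp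
qed

text \<open>In the critical non-degenerate case the generating function stays strictly above the
  diagonal on [0, 1): the defect sum of the terms below is zero, yet each term is nonnegative
  by Bernoulli's inequality and some term is positive.\<close>

lemma critical_pgf_no_fixed_point_below_1:
  fixes w :: real
  assumes critical: "(\<lambda>k. real k * pmf mu k) sums 1" and nondeg: "pmf mu 1 \<noteq> 1"
    and w: "0 \<le> w" "w < 1" and fixed: "(\<lambda>n. pmf mu n * w ^ n) sums w"
  shows False
proof -
  define d where "d n = pmf mu n * (w ^ n - 1 - real n * (w - 1))" for n
  have d_nonneg: "0 \<le> d n" for n
  proof -
    have "1 + real n * (w - 1) \<le> w ^ n" using Bernoulli_inequality[of "w - 1" n] w(1) by simp
    then show ?thesis unfolding d_def by (intro mult_nonneg_nonneg) simp_all
  qed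
  have "(\<lambda>n. pmf mu n * w ^ n - pmf mu n - (w - 1) * (real n * pmf mu n)) sums (w - 1 - (w - 1) * 1)"
  proof (intro sums_diff sums_mult)
    show "(\<lambda>n. pmf mu n * w ^ n) sums w" by (rule fixed)
    show "pmf mu sums 1" using summable_pmf suminf_pmf by (simp add: sums_iff)
    show "(\<lambda>n. real n * pmf mu n) sums 1" by (rule critical)
  qed
  moreover have "(\<lambda>n. pmf mu n * w ^ n - pmf mu n - (w - 1) * (real n * pmf mu n)) = d"
    unfolding d_def by (auto simp: algebra_simps)
  ultimately have "d sums 0" by simp
  then have "summable d" "suminf d = 0" by (auto simp: sums_iff)
  then have "\<And>n. d n = 0" using suminf_eq_zero_iff d_nonneg by blast
  moreover obtain k where k: "2 \<le> k" "0 < pmf mu k" using critical_ex_pmf_ge_2[OF critical nondeg] by blast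
  then have "0 < d k" unfolding d_def using strict_Bernoulli_inequality[OF w k(1)] by simp
  ultimately show False by simp
qed

lemma nn_integral_gw_weight_eq_1:
  assumes critical: "(\<lambda>k. real k * pmf mu k) sums 1" and nondeg: "pmf mu 1 \<noteq> 1"
  shows "(\<integral>\<^sup>+x. ennreal (gw_weight mu x) \<partial>count_space (Collect plane_tree)) = 1"
proof -
  let ?W = "\<integral>\<^sup>+x. ennreal (gw_weight mu x) \<partial>count_space (Collect plane_tree)"
  obtain w where w: "?W = ennreal w" "0 \<le> w" "w \<le> 1"
    using nn_integral_gw_weight_le_1[of mu] by (cases ?W) (auto simp: top_unique)
  have summable: "summable (\<lambda>n. pmf mu n * w ^ n)"
    by (rule summable_comparison_test[OF _ summable_pmf[of mu]])
       (use w in \<open>auto intro!: exI[of _ 0] simp: abs_mult mult_left_le power_le_one\<close>)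
  have "pgf mu (ennreal w) = (\<Sum>n. ennreal (pmf mu n * w ^ n))"
    unfolding pgf_def using w(2) by (simp add: ennreal_mult ennreal_power)
  also have "\<dots> = ennreal (\<Sum>n. pmf mu n * w ^ n)"
    by (rule suminf_ennreal2) (use w(2) summable in auto)
  finally have "ennreal (\<Sum>n. pmf mu n * w ^ n) = ennreal w"
    using nn_integral_gw_weight_fixed_point[of mu] w(1) by simp
  then have "(\<Sum>n. pmf mu n * w ^ n) = w"
    using w(2) by (subst (asm) ennreal_inj) (auto intro!: suminf_nonneg summable)
  then have "(\<lambda>n. pmf mu n * w ^ n) sums w" using summable by (simp add: sums_iff)
  then have "\<not> w < 1" using critical_pgf_no_fixed_point_below_1[OF critical nondeg w(2)] by blast
  then show ?thesis using w by simp
qed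

lemma suminf_ennreal_prob_Suc_atLeast:
  assumes critical: "(\<lambda>k. real k * pmf mu k) sums 1"
  shows "(\<Sum>n. ennreal (measure_pmf.prob mu {Suc n..})) = 1"
proof -
  have count: "(\<Sum>n. indicator {Suc n..} k :: ennreal) = of_nat k" for k :: nat
  proof -
    have "(\<Sum>n. indicator {Suc n..} k :: ennreal) = (\<Sum>n\<in>{..<k}. indicator {Suc n..} k)"
      by (rule suminf_finite) (auto simp: indicator_def)
    also have "\<dots> = (\<Sum>n\<in>{..<k}. 1)" by (intro sum.cong) (auto simp: indicator_def)
    finally show ?thesis by simp
  qed
  have "(\<Sum>n. ennreal (measure_pmf.prob mu {Suc n..})) =
      (\<Sum>n. \<integral>\<^sup>+k. indicator {Suc n..} k \<partial>measure_pmf mu)"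
    by (simp add: measure_pmf.emeasure_eq_measure)
  also have "\<dots> = (\<integral>\<^sup>+k. (\<Sum>n. indicator {Suc n..} k) \<partial>measure_pmf mu)"
    by (rule nn_integral_suminf[symmetric]) simp
  also have "\<dots> = (\<integral>\<^sup>+k. of_nat k \<partial>measure_pmf mu)"
    by (simp only: count)
  also have "\<dots> = (\<Sum>k. ennreal (pmf mu k) * of_nat k)"
    by (simp add: nn_integral_measure_pmf nn_integral_count_space_nat)
  also have "\<dots> = (\<Sum>k. ennreal (real k * pmf mu k))"
    by (intro suminf_cong) (simp add: ennreal_mult ennreal_of_nat_eq_real_of_nat mult.commute)
  also have "\<dots> = 1"
    by (subst suminf_ennreal2) (use critical in \<open>auto simp: sums_iff\<close>)
  finally show ?thesis .
qed

lemma nn_integral_spine_weight_eq_1: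
  assumes critical: "(\<lambda>k. real k * pmf mu k) sums 1" and nondeg: "pmf mu 1 \<noteq> 1"
  shows "(\<integral>\<^sup>+x. ennreal (spine_weight mu x) \<partial>count_space (Collect plane_tree)) = 1"
  using nn_integral_trees_by_root_subtrees[where F="\<lambda>t. ennreal (spine_weight mu t)" and A=UNIV,
      OF ennreal_spine_weight_join_trees]
  by (simp add: nn_integral_gw_weight_eq_1[OF critical nondeg] suminf_ennreal_prob_Suc_atLeast[OF critical])

section \<open>The splitting identity\<close>

lemma emeasure_GW:
  "emeasure (GW mu) A = (\<integral>\<^sup>+t. ennreal (gw_weight mu t) \<partial>count_space (Collect plane_tree \<inter> A))"
proof -
  have "emeasure (GW mu) A =
      (\<integral>\<^sup>+t. (if plane_tree t then ennreal (gw_weight mu t) else 0) * indicator A t \<partial>count_space UNIV)"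
    unfolding GW_def by (rule emeasure_density) simp_all
  also have "\<dots> = (\<integral>\<^sup>+t. ennreal (gw_weight mu t) * indicator (Collect plane_tree \<inter> A) t \<partial>count_space UNIV)"
    by (rule nn_integral_cong) (simp add: indicator_def)
  finally show ?thesis by (simp add: nn_integral_count_space_indicator)
qed

lemma emeasure_GW_spine:
  "emeasure (GW_spine mu) A = (\<integral>\<^sup>+t. ennreal (spine_weight mu t) \<partial>count_space (Collect plane_tree \<inter> A))"
proof -
  have "emeasure (GW_spine mu) A =
      (\<integral>\<^sup>+t. (if plane_tree t then ennreal (spine_weight mu t) else 0) * indicator A t \<partial>count_space UNIV)"
    unfolding GW_spine_def spine_weight_def by (rule emeasure_density) simp_all
  also have "\<dots> = (\<integral>\<^sup>+t. ennreal (spine_weight mu t) * indicator (Collect plane_tree \<inter> A) t \<partial>count_space UNIV)"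
    by (rule nn_integral_cong) (simp add: indicator_def)
  finally show ?thesis by (simp add: nn_integral_count_space_indicator)
qed

lemma sets_GW [simp]: "sets (GW mu) = UNIV" and space_GW [simp]: "space (GW mu) = UNIV"
  and sets_GW_spine [simp]: "sets (GW_spine mu) = UNIV" and space_GW_spine [simp]: "space (GW_spine mu) = UNIV"
  by (simp_all add: GW_def GW_spine_def)

lemma prob_space_GW:
  assumes critical: "(\<lambda>k. real k * pmf mu k) sums 1" and nondeg: "pmf mu 1 \<noteq> 1"
  shows "prob_space (GW mu)"
  by (rule prob_spaceI) (simp add: emeasure_GW nn_integral_gw_weight_eq_1[OF critical nondeg])

lemma prob_space_GW_spine:
  assumes critical: "(\<lambda>k. real k * pmf mu k) sums 1" and nondeg: "pmf mu 1 \<noteq> 1"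
  shows "prob_space (GW_spine mu)"
  by (rule prob_spaceI) (simp add: emeasure_GW_spine nn_integral_spine_weight_eq_1[OF critical nondeg])

lemma ennreal_prob_Suc_atLeast:
  "ennreal (measure_pmf.prob mu {Suc k..}) =
    ennreal (pmf mu (Suc k)) + ennreal (measure_pmf.prob mu {Suc (Suc k)..})"
proof -
  have "emeasure (measure_pmf mu) {Suc k} + emeasure (measure_pmf mu) {Suc (Suc k)..} =
      emeasure (measure_pmf mu) ({Suc k} \<union> {Suc (Suc k)..})"
    by (rule plus_emeasure) auto
  also have "{Suc k} \<union> {Suc (Suc k)..} = {Suc k..}" by auto
  finally show ?thesis
    by (simp add: measure_pmf.emeasure_eq_measure emeasure_pmf_single[symmetric])
qed

lemma gw_weight_add_spine_weight_graft_first: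
  assumes s: "plane_tree s" and r: "plane_tree r"
  shows "ennreal (gw_weight mu (graft_first s r)) + ennreal (spine_weight mu (graft_first s r)) =
    ennreal (gw_weight mu s) * ennreal (spine_weight mu r)"
proof -
  have sub: "\<forall>x\<in>set (root_subtrees r). plane_tree x" using plane_tree_root_subtrees[OF r] by blast
  then have all: "\<forall>x\<in>set (s # root_subtrees r). plane_tree x" using s by simp
  let ?P = "prod_list (map (\<lambda>x. ennreal (gw_weight mu x)) (root_subtrees r))"
  let ?k = "length (root_subtrees r)"
  have "ennreal (gw_weight mu (graft_first s r)) =
      ennreal (pmf mu (Suc ?k)) * (ennreal (gw_weight mu s) * ?P)"
    unfolding graft_first_def using ennreal_gw_weight_join_trees[OF all] by simp
  moreover have "ennreal (spine_weight mu (graft_first s r)) =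
      ennreal (measure_pmf.prob mu {Suc (Suc ?k)..}) * (ennreal (gw_weight mu s) * ?P)"
    unfolding graft_first_def using ennreal_spine_weight_join_trees[OF all] by simp
  moreover have "ennreal (spine_weight mu r) = ennreal (measure_pmf.prob mu {Suc ?k..}) * ?P"
    using ennreal_spine_weight_join_trees[OF sub, of mu] join_trees_root_subtrees[OF r] by simp
  ultimately show ?thesis
    unfolding ennreal_prob_Suc_atLeast[of mu ?k] by (simp add: algebra_simps)
qed

definition split_event :: "nat list set set \<Rightarrow> nat list set set \<Rightarrow> nat list set set" where
  "split_event A B = {t. 1 \<le> kids t [] \<and> subtree t [1] \<in> A \<and> reduced t \<in> B}"

lemma bij_betw_graft_first_split_event:
  "bij_betw (case_prod graft_first) ((Collect plane_tree \<inter> A) \<times> (Collect plane_tree \<inter> B))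
     (Collect plane_tree \<inter> split_event A B)"
proof (rule bij_betw_subset[OF bij_betw_graft_first])
  show "case_prod graft_first ` ((Collect plane_tree \<inter> A) \<times> (Collect plane_tree \<inter> B)) =
      Collect plane_tree \<inter> split_event A B"
  proof safe
    fix t assume t: "plane_tree t" "t \<in> split_event A B"
    then have "t \<in> case_prod graft_first ` (Collect plane_tree \<times> Collect plane_tree)"
      using bij_betw_graft_first by (auto simp: bij_betw_def split_event_def)
    then obtain s r where sr: "plane_tree s" "plane_tree r" "t = graft_first s r" by auto
    then have "s \<in> A" "r \<in> B" using t subtree_graft_first reduced_graft_first by (auto simp: split_event_def)
    then show "t \<in> case_prod graft_first ` ((Collect plane_tree \<inter> A) \<times> (Collect plane_tree \<inter> B))"
      using sr by auto
  next
    fix s r assume "s \<in> A" "r \<in> B" "plane_tree s" "plane_tree r"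
    then show "plane_tree (graft_first s r)" "graft_first s r \<in> split_event A B"
      using graft_first_simps[of s r] by (simp_all add: split_event_def)
  qed
qed auto

lemma emeasure_GW_add_GW_spine_split_event:
  "emeasure (GW mu) (split_event A B) + emeasure (GW_spine mu) (split_event A B) =
    emeasure (GW mu) A * emeasure (GW_spine mu) B"
proof -
  let ?AB = "(Collect plane_tree \<inter> A) \<times> (Collect plane_tree \<inter> B)"
  have "emeasure (GW mu) (split_event A B) + emeasure (GW_spine mu) (split_event A B) =
      (\<integral>\<^sup>+t. ennreal (gw_weight mu t) + ennreal (spine_weight mu t)
        \<partial>count_space (Collect plane_tree \<inter> split_event A B))"
    unfolding emeasure_GW emeasure_GW_spine by (rule nn_integral_add[symmetric]) simp_all
  also have "\<dots> = (\<integral>\<^sup>+p. ennreal (gw_weight mu (case_prod graft_first p)) +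
      ennreal (spine_weight mu (case_prod graft_first p)) \<partial>count_space ?AB)"
    by (rule nn_integral_bij_count_space[OF bij_betw_graft_first_split_event, symmetric])
  also have "\<dots> = (\<integral>\<^sup>+p. ennreal (gw_weight mu (fst p)) * ennreal (spine_weight mu (snd p)) \<partial>count_space ?AB)"
    by (rule nn_integral_cong) (auto simp: gw_weight_add_spine_weight_graft_first)
  also have "\<dots> = emeasure (GW mu) A * emeasure (GW_spine mu) B"
    unfolding emeasure_GW emeasure_GW_spine by (rule nn_integral_count_space_Times)
  finally show ?thesis .
qed

lemma emeasure_GW_leaf: "emeasure (GW mu) {t. kids t [] = 0} = ennreal (pmf mu 0)"
  and emeasure_GW_spine_leaf: "emeasure (GW_spine mu) {t. kids t [] = 0} = ennreal (1 - pmf mu 0)"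
proof -
  have leaf: "Collect plane_tree \<inter> {t. kids t [] = 0} = {{[]}}"
    using plane_tree_kids_Nil_0_iff plane_tree_singleton by auto
  have k: "kids {[]} [] = 0" by (simp add: kids_def)
  show "emeasure (GW mu) {t. kids t [] = 0} = ennreal (pmf mu 0)"
    unfolding emeasure_GW leaf by (simp add: nn_integral_count_space_finite gw_weight_def k)
  have "{Suc 0..} = space (measure_pmf mu) - {0}" by auto
  then have "measure_pmf.prob mu {Suc 0..} = 1 - pmf mu 0"
    using measure_pmf.prob_compl[of "{0}" mu] by (simp add: measure_pmf_single)
  then show "emeasure (GW_spine mu) {t. kids t [] = 0} = ennreal (1 - pmf mu 0)"
    unfolding emeasure_GW_spine leaf by (simp add: nn_integral_count_space_finite spine_weight_def k)
qed

lemma critical_pmf_0_pos: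
  assumes critical: "(\<lambda>k. real k * pmf mu k) sums 1" and nondeg: "pmf mu 1 \<noteq> 1"
  shows "0 < pmf mu 0"
proof (rule ccontr)
  assume "\<not> 0 < pmf mu 0"
  then have p0: "pmf mu 0 = 0" using pmf_nonneg[of mu 0] by linarith
  define e where "e k = real k * pmf mu k - pmf mu k" for k
  have "e sums (1 - 1)" unfolding e_def
    using sums_diff[OF critical] summable_pmf suminf_pmf by (simp add: sums_iff)
  then have es: "summable e" "suminf e = 0" by (auto simp: sums_iff)
  have e_nonneg: "0 \<le> e k" for k
    using p0 pmf_nonneg[of mu k] by (cases k) (auto simp: e_def algebra_simps)
  then have e0: "\<And>k. e k = 0" using es suminf_eq_zero_iff by blast
  obtain k where k: "2 \<le> k" "0 < pmf mu k" using critical_ex_pmf_ge_2[OF critical nondeg] by blast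
  then have "0 < e k" by (simp add: e_def)
  then show False using e0 by simp
qed

section \<open>The product measure and the shift\<close>

definition tree_factor :: "nat pmf \<Rightarrow> nat \<Rightarrow> nat list set measure" where
  "tree_factor mu i = (if i = 0 then GW mu else GW_spine mu)"

lemma tree_product_eq_PiM: "tree_product mu = PiM UNIV (tree_factor mu)"
  unfolding tree_product_def tree_factor_def by simp

lemma sets_tree_factor [simp]: "sets (tree_factor mu i) = UNIV"
  and space_tree_factor [simp]: "space (tree_factor mu i) = UNIV"
  by (simp_all add: tree_factor_def)

lemma space_tree_product [simp]: "space (tree_product mu) = UNIV"
  by (auto simp: tree_product_eq_PiM space_PiM PiE_def Pi_def extensional_def)

lemma space_PiM_tree_factor [simp]: "space (PiM UNIV (tree_factor mu)) = UNIV"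
  using space_tree_product[of mu] unfolding tree_product_eq_PiM .

lemma measurable_tree_product_coord:
  "(\<lambda>f. H (f i)) \<in> measurable (tree_product mu) (count_space UNIV)"
proof -
  have "(\<lambda>f. f i) \<in> measurable (tree_product mu) (tree_factor mu i)"
    unfolding tree_product_eq_PiM by (rule measurable_component_singleton) simp
  then show ?thesis by (rule measurable_compose) (simp add: measurable_def)
qed

lemma sets_tree_product_coord: "{f. P (f i)} \<in> sets (tree_product mu)"
proof -
  have "(\<lambda>f. P (f i)) -` {True} \<inter> space (tree_product mu) \<in> sets (tree_product mu)"
    by (rule measurable_sets[OF measurable_tree_product_coord]) simp
  moreover have "(\<lambda>f. P (f i)) -` {True} \<inter> space (tree_product mu) = {f. P (f i)}" by auto
  ultimately show ?thesis by simp
qed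

lemma sets_tree_product_All:
  "(\<And>i::nat. {f. P i f} \<in> sets (tree_product mu)) \<Longrightarrow> {f. \<forall>i. P i f} \<in> sets (tree_product mu)"
  using sets.sets_Collect_countable_All[of "tree_product mu" P] by simp

lemma sets_tree_product_Ex:
  "(\<And>i::nat. {f. P i f} \<in> sets (tree_product mu)) \<Longrightarrow> {f. \<exists>i. P i f} \<in> sets (tree_product mu)"
  using sets.sets_Collect_countable_Ex[of "tree_product mu" P] by simp

lemma sets_tree_product_Ball:
  "(\<And>i. i \<in> I \<Longrightarrow> {f. P i f} \<in> sets (tree_product mu)) \<Longrightarrow>
    {f. \<forall>i\<in>(I::nat set). P i f} \<in> sets (tree_product mu)"
  using sets.sets_Collect_countable_All'[of I "tree_product mu" P] by simp

lemma sets_tree_product_conj: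
  assumes "{f. P f} \<in> sets (tree_product mu)" "{f. Q f} \<in> sets (tree_product mu)"
  shows "{f. P f \<and> Q f} \<in> sets (tree_product mu)"
proof -
  have "{f. P f} \<inter> {f. Q f} \<in> sets (tree_product mu)" using assms by blast
  moreover have "{f. P f} \<inter> {f. Q f} = {f. P f \<and> Q f}" by blast
  ultimately show ?thesis by simp
qed

lemmas sets_tree_product_Collect =
  sets_tree_product_All sets_tree_product_Ex sets_tree_product_Ball sets_tree_product_conj
  sets_tree_product_coord

lemma tau_eq: "tau f i = (if i = 0 then subtree (f (first_nontriv f)) [1]
    else if i = 1 then reduced (f (first_nontriv f)) else f (i + first_nontriv f - 1))"
  by (simp add: tau_def Let_def)

lemma first_nontriv_eqI:
  assumes "1 \<le> kids (f m) []" "\<forall>i<m. kids (f i) [] = 0"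
  shows "first_nontriv f = m"
  unfolding first_nontriv_def
proof (rule Least_equality)
  show "m \<le> y" if "1 \<le> kids (f y) []" for y
  proof (rule ccontr)
    assume "\<not> m \<le> y"
    then show False using assms(2) that by simp
  qed
qed fact

lemma first_nontriv:
  assumes "\<exists>i. 1 \<le> kids (f i) []"
  shows "1 \<le> kids (f (first_nontriv f)) []" "\<forall>i<first_nontriv f. kids (f i) [] = 0"
proof -
  show "1 \<le> kids (f (first_nontriv f)) []" unfolding first_nontriv_def using assms by (rule LeastI_ex)
  show "\<forall>i<first_nontriv f. kids (f i) [] = 0"
  proof (intro allI impI)
    fix i assume "i < first_nontriv f"
    then have "\<not> 1 \<le> kids (f i) []" unfolding first_nontriv_def by (rule not_less_Least)
    then show "kids (f i) [] = 0" by simp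
  qed
qed

lemma measurable_tau: "tau \<in> measurable (tree_product mu) (tree_product mu)"
proof -
  have first_nontriv: "first_nontriv \<in> measurable (tree_product mu) (count_space UNIV)"
    unfolding first_nontriv_def[abs_def] by (rule measurable_Least) (rule measurable_tree_product_coord)
  have "(\<lambda>f. tau f i) \<in> measurable (tree_product mu) (tree_factor mu i)" for i
  proof -
    have "(\<lambda>f. (\<lambda>m f. if i = 0 then subtree (f m) [1] else if i = 1 then reduced (f m)
        else f (i + m - 1)) (first_nontriv f) f) \<in> measurable (tree_product mu) (count_space UNIV)"
    proof (rule measurable_compose_countable[OF _ first_nontriv])
      fix m :: nat
      consider "i = 0" | "i = 1" | "2 \<le> i" by linarith
      then show "(\<lambda>f. if i = 0 then subtree (f m) [1] else if i = 1 then reduced (f m) else f (i + m - 1))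
          \<in> measurable (tree_product mu) (count_space UNIV)"
        by cases (use measurable_tree_product_coord[of "\<lambda>t. subtree t [1]" m mu]
          measurable_tree_product_coord[of reduced m mu]
          measurable_tree_product_coord[of "\<lambda>t. t" "i + m - 1" mu] in simp_all)
    qed
    then show ?thesis
      using measurable_cong_sets[of "tree_product mu" "tree_product mu" "tree_factor mu i" "count_space UNIV"]
      by (simp add: tau_eq)
  qed
  then show ?thesis unfolding tree_product_eq_PiM by (intro measurable_PiM_single') simp_all
qed

lemma plane_tree_nonroot_iff: "plane_tree t \<Longrightarrow> (\<exists>u\<in>t. u \<noteq> []) \<longleftrightarrow> 1 \<le> kids t []"
proof
  assume t: "plane_tree t" and "1 \<le> kids t []"
  then have "[] @ [1] \<in> t" using plane_tree_snoc_iff[OF t plane_tree_Nil[OF t]] by simp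
  then show "\<exists>u\<in>t. u \<noteq> []" by force
qed (use kids_Nil_ge_1 in blast)

lemma infinite_trees_iff:
  "f \<in> infinite_trees \<longleftrightarrow> (\<forall>i. plane_tree (f i)) \<and> (\<forall>N. \<exists>i\<ge>N. 1 \<le> kids (f i) [])"
proof -
  let ?U = "\<Union>i. {(i, u) | u. u \<in> f i \<and> u \<noteq> []}"
  have "infinite ?U \<longleftrightarrow> (\<forall>N. \<exists>i\<ge>N. \<exists>u\<in>f i. u \<noteq> [])" if plane: "\<forall>i. plane_tree (f i)"
  proof
    assume inf: "infinite ?U"
    show "\<forall>N. \<exists>i\<ge>N. \<exists>u\<in>f i. u \<noteq> []"
    proof (rule ccontr)
      assume "\<not> ?thesis"
      then obtain N where N: "\<forall>i\<ge>N. \<forall>u\<in>f i. u = []" by blast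
      have "?U \<subseteq> (\<Union>i<N. {i} \<times> f i)"
      proof
        fix x assume "x \<in> ?U"
        then obtain i u where x: "x = (i, u)" "u \<in> f i" "u \<noteq> []" by blast
        then have "i < N" using N by (meson not_le)
        then show "x \<in> (\<Union>i<N. {i} \<times> f i)" using x by blast
      qed
      moreover have "finite (\<Union>i<N. {i} \<times> f i)" using plane plane_tree_finite by blast
      ultimately show False using inf finite_subset by blast
    qed
  next
    assume ex: "\<forall>N. \<exists>i\<ge>N. \<exists>u\<in>f i. u \<noteq> []"
    show "infinite ?U"
    proof
      assume "finite ?U"
      then have "finite (fst ` ?U)" by (rule finite_imageI)
      then obtain N where N: "\<forall>n\<in>fst ` ?U. n < N" using finite_nat_set_iff_bounded by blast
      obtain i u where iu: "N \<le> i" "u \<in> f i" "u \<noteq> []" using ex by blast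
      then have "i \<in> fst ` ?U" by force
      then show False using N iu(1) by fastforce
    qed
  qed
  then show ?thesis unfolding infinite_trees_def using plane_tree_nonroot_iff by (auto simp: mem_Collect_eq)
qed

lemma sets_infinite_trees: "infinite_trees \<in> sets (tree_product mu)"
proof -
  have "infinite_trees = {f. (\<forall>i. plane_tree (f i)) \<and> (\<forall>N. \<exists>i. N \<le> i \<and> 1 \<le> kids (f i) [])}"
    using infinite_trees_iff by blast
  also have "\<dots> \<in> sets (tree_product mu)"
    by (intro sets_tree_product_Collect)
  finally show ?thesis .
qed

lemma tau_in_infinite_trees:
  assumes "f \<in> infinite_trees" shows "tau f \<in> infinite_trees"
proof -
  have plane: "\<forall>i. plane_tree (f i)" and inf: "\<forall>N. \<exists>i\<ge>N. 1 \<le> kids (f i) []"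
    using assms unfolding infinite_trees_iff by auto
  define m where "m = first_nontriv f"
  have m: "1 \<le> kids (f m) []" using first_nontriv inf unfolding m_def by blast
  have tau_ge_2: "tau f j = f (j + m - 1)" if "2 \<le> j" for j using that by (simp add: tau_eq m_def)
  have "f m \<in> case_prod graft_first ` (Collect plane_tree \<times> Collect plane_tree)"
    using bij_betw_graft_first m plane by (auto simp: bij_betw_def)
  then obtain s r where sr: "plane_tree s" "plane_tree r" "f m = graft_first s r" by auto
  then have "plane_tree (tau f 0)" "plane_tree (tau f 1)"
    using graft_first_simps by (simp_all add: tau_eq flip: m_def)
  moreover have "plane_tree (tau f j)" if "2 \<le> j" for j using tau_ge_2[OF that] plane by simp
  ultimately have "plane_tree (tau f j)" for j
    by (metis One_nat_def less_2_cases not_less)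
  moreover have "\<exists>j\<ge>N. 1 \<le> kids (tau f j) []" for N
  proof -
    obtain i where "N + m + 1 \<le> i" "1 \<le> kids (f i) []" using inf by blast
    then show ?thesis using tau_ge_2[of "i + 1 - m"] by (intro exI[of _ "i + 1 - m"]) auto
  qed
  ultimately show ?thesis unfolding infinite_trees_iff by blast
qed

lemma ennreal_le_power_imp_zero:
  fixes c :: real
  assumes le: "\<And>n. x \<le> ennreal (c ^ n)" and c: "0 \<le> c" "c < 1"
  shows "x = 0"
proof -
  have "x \<le> 1" using le[of 0] by simp
  then obtain r where r: "x = ennreal r" "0 \<le> r" by (cases x) (auto simp: top_unique)
  show ?thesis
  proof (rule ccontr)
    assume "x \<noteq> 0"
    then have "0 < r" using r by (simp add: less_le)
    then obtain n where "c ^ n < r" using real_arch_pow_inv c(2) by blast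
    moreover have "r \<le> c ^ n" using le[of n] r c by (simp add: ennreal_le_iff)
    ultimately show False by simp
  qed
qed

lemma prod_emeasure_tree_factor_leaf:
  "(\<Prod>i<m. emeasure (tree_factor mu i) {t. kids t [] = 0}) =
    (if m = 0 then 1 else ennreal (pmf mu 0 * (1 - pmf mu 0) ^ (m - 1)))"
proof (cases m)
  case (Suc k)
  have "(\<Prod>i<Suc k. emeasure (tree_factor mu i) {t. kids t [] = 0}) =
      emeasure (tree_factor mu 0) {t. kids t [] = 0} *
      (\<Prod>i<k. emeasure (tree_factor mu (Suc i)) {t. kids t [] = 0})"
    by (rule prod.lessThan_Suc_shift)
  also have "\<dots> = ennreal (pmf mu 0) * (\<Prod>i<k. ennreal (1 - pmf mu 0))"
    by (simp add: tree_factor_def emeasure_GW_leaf emeasure_GW_spine_leaf)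
  also have "\<dots> = ennreal (pmf mu 0 * (1 - pmf mu 0) ^ k)"
    using pmf_le_1[of mu 0] by (simp add: ennreal_power ennreal_mult)
  finally show ?thesis using Suc by simp
qed simp

lemma first_nontriv_cylinder_eq:
  fixes C :: "nat list set set" and F :: "nat \<Rightarrow> nat list set set" and R :: "nat set"
  assumes R: "\<forall>j\<in>R. 2 \<le> j"
  shows "{f. (\<forall>i<m. kids (f i) [] = 0) \<and> f m \<in> C \<and> (\<forall>j\<in>R. f (j + m - 1) \<in> F j)} =
    {f. \<forall>i \<in> insert m {..<m} \<union> (\<lambda>j. j + m - 1) ` R.
       f i \<in> (if i < m then {t. kids t [] = 0} else if i = m then C else F (i + 1 - m))}"
proof -
  let ?X = "\<lambda>i. if i < m then {t. kids t [] = 0} else if i = m then C else F (i + 1 - m)"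
  have "(\<forall>i \<in> insert m {..<m} \<union> (\<lambda>j. j + m - 1) ` R. f i \<in> ?X i) \<longleftrightarrow>
      (\<forall>i<m. f i \<in> ?X i) \<and> f m \<in> ?X m \<and> (\<forall>j\<in>R. f (j + m - 1) \<in> ?X (j + m - 1))" for f
    by blast
  moreover have "?X (j + m - 1) = F j" if "j \<in> R" for j
  proof -
    have "2 \<le> j" using R that by blast
    then have "\<not> j + m - 1 < m" "j + m - 1 \<noteq> m" "j + m - 1 + 1 - m = j" by auto
    then show ?thesis by simp
  qed
  ultimately show ?thesis by auto
qed

text \<open>When every root is a leaf, first_nontriv is the junk value LEAST of an empty set; that
  null event is set aside.\<close>

lemma tau_in_cylinder_iff:
  assumes R: "\<forall>j\<in>R. 2 \<le> j" and m: "first_nontriv f = m"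
  shows "(tau f 0 \<in> A \<and> tau f 1 \<in> B \<and> (\<forall>j\<in>R. tau f j \<in> F j)) \<longleftrightarrow>
    (subtree (f m) [1] \<in> A \<and> reduced (f m) \<in> B \<and> (\<forall>j\<in>R. f (j + m - 1) \<in> F j))"
proof -
  have "tau f j = f (j + m - 1)" if "j \<in> R" for j
    using R that m by (auto simp: tau_eq)
  then have "(\<forall>j\<in>R. tau f j \<in> F j) \<longleftrightarrow> (\<forall>j\<in>R. f (j + m - 1) \<in> F j)" by simp
  moreover have "tau f 0 = subtree (f m) [1]" "tau f 1 = reduced (f m)"
    using m by (simp_all add: tau_eq)
  ultimately show ?thesis by simp
qed

lemma tau_cylinder_decomp:
  fixes A B :: "nat list set set" and F :: "nat \<Rightarrow> nat list set set"
  assumes R: "\<forall>j\<in>R. 2 \<le> j"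
  defines "E m \<equiv> {f. (\<forall>i<m. kids (f i) [] = 0) \<and> f m \<in> split_event A B \<and> (\<forall>j\<in>R. f (j + m - 1) \<in> F j)}"
  shows "{f. tau f 0 \<in> A \<and> tau f 1 \<in> B \<and> (\<forall>j\<in>R. tau f j \<in> F j)} - {f. \<forall>i. kids (f i) [] = 0} =
      (\<Union>m. E m)"
    and "disjoint_family E"
proof -
  have E_first: "first_nontriv f = m" and E_nonleaf: "f \<notin> {f. \<forall>i. kids (f i) [] = 0}"
    if "f \<in> E m" for f m
  proof -
    have "1 \<le> kids (f m) []" "\<forall>i<m. kids (f i) [] = 0" using that by (simp_all add: E_def split_event_def)
    then show "first_nontriv f = m" by (rule first_nontriv_eqI)
    show "f \<notin> {f. \<forall>i. kids (f i) [] = 0}"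
    proof
      assume "f \<in> {f. \<forall>i. kids (f i) [] = 0}"
      then have "kids (f m) [] = 0" by simp
      then show False using \<open>1 \<le> kids (f m) []\<close> by simp
    qed
  qed
  have E_iff: "f \<in> E m \<longleftrightarrow> tau f 0 \<in> A \<and> tau f 1 \<in> B \<and> (\<forall>j\<in>R. tau f j \<in> F j)"
    if "first_nontriv f = m" "\<exists>i. 1 \<le> kids (f i) []" for f m
    using first_nontriv[OF that(2)] tau_in_cylinder_iff[OF R that(1)] that(1)
    by (simp add: E_def split_event_def)
  show "{f. tau f 0 \<in> A \<and> tau f 1 \<in> B \<and> (\<forall>j\<in>R. tau f j \<in> F j)} - {f. \<forall>i. kids (f i) [] = 0} =
      (\<Union>m. E m)"
  proof (intro set_eqI iffI)
    fix f assume f: "f \<in> {f. tau f 0 \<in> A \<and> tau f 1 \<in> B \<and> (\<forall>j\<in>R. tau f j \<in> F j)} - {f. \<forall>i. kids (f i) [] = 0}"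
    then have "\<exists>i. 1 \<le> kids (f i) []" by (auto simp: Suc_le_eq)
    then have "f \<in> E (first_nontriv f)" using E_iff f by blast
    then show "f \<in> (\<Union>m. E m)" by blast
  next
    fix f assume "f \<in> (\<Union>m. E m)"
    then obtain m where f: "f \<in> E m" by blast
    then have "\<exists>i. 1 \<le> kids (f i) []" using E_nonleaf by (auto simp: Suc_le_eq)
    then show "f \<in> {f. tau f 0 \<in> A \<and> tau f 1 \<in> B \<and> (\<forall>j\<in>R. tau f j \<in> F j)} - {f. \<forall>i. kids (f i) [] = 0}"
      using E_iff[OF E_first[OF f]] E_nonleaf[OF f] f by blast
  qed
  show "disjoint_family E"
    unfolding disjoint_family_on_def using E_first by blast
qed

context
  fixes mu :: "nat pmf"
  assumes critical: "(\<lambda>k. real k * pmf mu k) sums 1" and nondeg: "pmf mu 1 \<noteq> 1"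
begin

lemma prob_space_tree_factor: "prob_space (tree_factor mu i)"
  unfolding tree_factor_def using prob_space_GW[OF critical nondeg] prob_space_GW_spine[OF critical nondeg]
  by simp

lemma product_prob_space_tree_factor: "product_prob_space (tree_factor mu)"
  unfolding product_prob_space_def product_prob_space_axioms_def product_sigma_finite_def
  using prob_space_tree_factor prob_space_imp_sigma_finite by blast

interpretation tree_factor: product_prob_space "tree_factor mu" UNIV
  by (rule product_prob_space_tree_factor)

lemma null_sets_eventually_leaves:
  "{f. \<forall>i\<ge>N. kids (f i) [] = 0} \<in> null_sets (tree_product mu)"
proof -
  let ?Y = "{f. \<forall>i\<ge>N. kids (f i) [] = 0}"
  have p0: "0 < pmf mu 0" "pmf mu 0 \<le> 1" using critical_pmf_0_pos[OF critical nondeg] pmf_le_1 by auto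
  have "emeasure (tree_product mu) ?Y \<le> ennreal ((1 - pmf mu 0) ^ n)" for n
  proof -
    let ?J = "{Suc N..N + n}"
    have "emeasure (tree_product mu) ?Y \<le>
        emeasure (PiM UNIV (tree_factor mu)) {f \<in> space (PiM UNIV (tree_factor mu)). \<forall>i\<in>?J. f i \<in> {t. kids t [] = 0}}"
      unfolding tree_product_eq_PiM[symmetric]
      by (intro emeasure_mono) (auto intro!: sets_tree_product_Collect)
    also have "\<dots> = (\<Prod>i\<in>?J. emeasure (tree_factor mu i) {t. kids t [] = 0})"
      by (rule tree_factor.emeasure_PiM_Collect) simp_all
    also have "\<dots> = ennreal ((1 - pmf mu 0) ^ n)"
      using p0 by (simp add: tree_factor_def emeasure_GW_spine_leaf ennreal_power)
    finally show ?thesis .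
  qed
  then have "emeasure (tree_product mu) ?Y = 0"
    by (rule ennreal_le_power_imp_zero) (use p0 in auto)
  moreover have "?Y \<in> sets (tree_product mu)" by (intro sets_tree_product_Collect)
  ultimately show ?thesis by (simp add: null_sets_def)
qed

lemma null_sets_all_leaves: "{f. \<forall>i. kids (f i) [] = 0} \<in> null_sets (tree_product mu)"
  using null_sets_eventually_leaves[of 0] by simp

lemma null_sets_compl_infinite_trees: "UNIV - infinite_trees \<in> null_sets (tree_product mu)"
proof -
  have not_plane: "{f. \<not> plane_tree (f i)} \<in> null_sets (tree_product mu)" for i
  proof -
    have "Collect plane_tree \<inter> {t. \<not> plane_tree t} = {}" by blast
    then have "emeasure (tree_factor mu i) {t. \<not> plane_tree t} = 0"
      by (simp add: tree_factor_def emeasure_GW emeasure_GW_spine nn_integral_count_space_finite)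
    moreover have "emeasure (PiM UNIV (tree_factor mu))
        {f \<in> space (PiM UNIV (tree_factor mu)). f i \<in> {t. \<not> plane_tree t}} =
        emeasure (tree_factor mu i) {t. \<not> plane_tree t}"
      by (rule tree_factor.emeasure_PiM_Collect_single) simp_all
    ultimately have "emeasure (PiM UNIV (tree_factor mu)) {f. \<not> plane_tree (f i)} = 0" by simp
    then show ?thesis
      using sets_tree_product_coord[of "\<lambda>t. \<not> plane_tree t" i mu]
      by (simp add: tree_product_eq_PiM null_sets_def)
  qed
  have "UNIV - infinite_trees \<subseteq>
      (\<Union>i. {f. \<not> plane_tree (f i)}) \<union> (\<Union>N. {f. \<forall>i\<ge>N. kids (f i) [] = 0})"
  proof
    fix f assume "f \<in> UNIV - infinite_trees"
    then consider "\<exists>i. \<not> plane_tree (f i)" | "\<exists>N. \<forall>i\<ge>N. \<not> 1 \<le> kids (f i) []"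
      using infinite_trees_iff[of f] by blast
    then show "f \<in> (\<Union>i. {f. \<not> plane_tree (f i)}) \<union> (\<Union>N. {f. \<forall>i\<ge>N. kids (f i) [] = 0})"
    proof cases
      case 2
      then obtain N where "\<forall>i\<ge>N. \<not> 1 \<le> kids (f i) []" by blast
      then have "\<forall>i\<ge>N. kids (f i) [] = 0" by (simp add: not_le less_one)
      then show ?thesis by blast
    qed blast
  qed
  moreover have "(\<Union>i. {f. \<not> plane_tree (f i)}) \<union> (\<Union>N. {f. \<forall>i\<ge>N. kids (f i) [] = 0}) \<in>
      null_sets (tree_product mu)"
    using not_plane null_sets_eventually_leaves by (intro null_sets.Un null_sets_UN) auto
  moreover have "UNIV - infinite_trees \<in> sets (tree_product mu)"
    using sets.compl_sets[OF sets_infinite_trees[of mu]] by simp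
  ultimately show ?thesis by (meson null_sets_subset)
qed

lemma suminf_geometric_pmf_0: "(\<Sum>k. ennreal (pmf mu 0 * (1 - pmf mu 0) ^ k)) = 1"
proof -
  have p: "0 < pmf mu 0" "pmf mu 0 \<le> 1" using critical_pmf_0_pos[OF critical nondeg] pmf_le_1 by auto
  then have n: "norm (1 - pmf mu 0) < 1" by simp
  have s: "summable (\<lambda>k. (1 - pmf mu 0) ^ k)" using summable_geometric[OF n] .
  have "(\<Sum>k. ennreal (pmf mu 0 * (1 - pmf mu 0) ^ k)) = ennreal (\<Sum>k. pmf mu 0 * (1 - pmf mu 0) ^ k)"
    by (rule suminf_ennreal2) (use p s in \<open>auto intro: summable_mult\<close>)
  also have "(\<Sum>k. pmf mu 0 * (1 - pmf mu 0) ^ k) = pmf mu 0 * (1 / (1 - (1 - pmf mu 0)))"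
    using suminf_mult[OF s, of "pmf mu 0"] suminf_geometric[OF n] by simp
  also have "\<dots> = 1" using p by simp
  finally show ?thesis by simp
qed

lemma emeasure_first_nontriv_cylinder:
  assumes R: "finite R" "\<forall>j\<in>R. 2 \<le> j"
  shows "emeasure (tree_product mu)
      {f. (\<forall>i<m. kids (f i) [] = 0) \<and> f m \<in> C \<and> (\<forall>j\<in>R. f (j + m - 1) \<in> F j)} =
    (\<Prod>i<m. emeasure (tree_factor mu i) {t. kids t [] = 0}) * emeasure (tree_factor mu m) C *
      (\<Prod>j\<in>R. emeasure (GW_spine mu) (F j))"
proof -
  let ?J = "insert m {..<m} \<union> (\<lambda>j. j + m - 1) ` R"
  let ?X = "\<lambda>i. if i < m then {t. kids t [] = 0} else if i = m then C else F (i + 1 - m)"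
  have disj: "insert m {..<m} \<inter> (\<lambda>j. j + m - 1) ` R = {}" using R(2) by force
  have "emeasure (tree_product mu)
      {f. (\<forall>i<m. kids (f i) [] = 0) \<and> f m \<in> C \<and> (\<forall>j\<in>R. f (j + m - 1) \<in> F j)} =
      emeasure (PiM UNIV (tree_factor mu)) {f \<in> space (PiM UNIV (tree_factor mu)). \<forall>i\<in>?J. f i \<in> ?X i}"
    unfolding first_nontriv_cylinder_eq[OF R(2)] tree_product_eq_PiM by simp
  also have "\<dots> = (\<Prod>i\<in>?J. emeasure (tree_factor mu i) (?X i))"
    by (rule tree_factor.emeasure_PiM_Collect) (use R(1) in auto)
  also have "\<dots> = (\<Prod>i\<in>insert m {..<m}. emeasure (tree_factor mu i) (?X i)) *
      (\<Prod>i\<in>(\<lambda>j. j + m - 1) ` R. emeasure (tree_factor mu i) (?X i))"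
    by (rule prod.union_disjoint) (use R(1) disj in auto)
  also have "(\<Prod>i\<in>insert m {..<m}. emeasure (tree_factor mu i) (?X i)) =
      emeasure (tree_factor mu m) C * (\<Prod>i<m. emeasure (tree_factor mu i) {t. kids t [] = 0})"
    by (simp add: prod.insert)
  also have "(\<Prod>i\<in>(\<lambda>j. j + m - 1) ` R. emeasure (tree_factor mu i) (?X i)) =
      (\<Prod>j\<in>R. emeasure (tree_factor mu (j + m - 1)) (?X (j + m - 1)))"
    by (rule prod.reindex_cong[where l="\<lambda>j. j + m - 1"]) (use R(2) in \<open>auto simp: inj_on_def\<close>)
  also have "\<dots> = (\<Prod>j\<in>R. emeasure (GW_spine mu) (F j))"
  proof (rule prod.cong[OF refl])
    fix j assume "j \<in> R"
    then have "2 \<le> j" using R(2) by blast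
    then have "\<not> j + m - 1 < m" "j + m - 1 \<noteq> m" "j + m - 1 + 1 - m = j" "j + m - 1 \<noteq> 0" by auto
    then show "emeasure (tree_factor mu (j + m - 1)) (?X (j + m - 1)) = emeasure (GW_spine mu) (F j)"
      by (simp add: tree_factor_def)
  qed
  finally show ?thesis by (simp add: mult_ac)
qed

lemma emeasure_tau_cylinder:
  assumes R: "finite R" "\<forall>j\<in>R. 2 \<le> j"
  shows "emeasure (tree_product mu) {f. tau f 0 \<in> A \<and> tau f 1 \<in> B \<and> (\<forall>j\<in>R. tau f j \<in> F j)} =
    emeasure (GW mu) A * emeasure (GW_spine mu) B * (\<Prod>j\<in>R. emeasure (GW_spine mu) (F j))"
proof -
  define E where "E m = {f. (\<forall>i<m. kids (f i) [] = 0) \<and> f m \<in> split_event A B \<and>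
    (\<forall>j\<in>R. f (j + m - 1) \<in> F j)}" for m
  define X where "X = {f. tau f 0 \<in> A \<and> tau f 1 \<in> B \<and> (\<forall>j\<in>R. tau f j \<in> F j)}"
  define Pr where "Pr = (\<Prod>j\<in>R. emeasure (GW_spine mu) (F j))"
  note decomp = tau_cylinder_decomp[OF R(2), of A B F, folded E_def X_def]
  have X: "X \<in> sets (tree_product mu)"
  proof -
    have "tau -` {g. g 0 \<in> A \<and> g 1 \<in> B \<and> (\<forall>j\<in>R. g j \<in> F j)} \<inter> space (tree_product mu) \<in> sets (tree_product mu)"
      by (intro measurable_sets[OF measurable_tau] sets_tree_product_Collect)
    then show ?thesis unfolding X_def by (simp add: vimage_def)
  qed
  have "emeasure (tree_product mu) X = emeasure (tree_product mu) (X - {f. \<forall>i. kids (f i) [] = 0})"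
    by (rule emeasure_Diff_null_set[OF null_sets_all_leaves X, symmetric])
  also have "\<dots> = (\<Sum>m. emeasure (tree_product mu) (E m))"
    unfolding decomp(1)
    by (rule suminf_emeasure[symmetric]) (use decomp(2) in \<open>auto simp: E_def intro!: sets_tree_product_Collect\<close>)
  also have "\<dots> = (\<Sum>m. (if m = 0 then 1 else ennreal (pmf mu 0 * (1 - pmf mu 0) ^ (m - 1))) *
      emeasure (tree_factor mu m) (split_event A B) * Pr)"
    unfolding E_def Pr_def emeasure_first_nontriv_cylinder[OF R] prod_emeasure_tree_factor_leaf ..
  also have "\<dots> = emeasure (GW mu) (split_event A B) * Pr + emeasure (GW_spine mu) (split_event A B) * Pr"
  proof -
    let ?c = "\<lambda>m. (if m = 0 then 1 else ennreal (pmf mu 0 * (1 - pmf mu 0) ^ (m - 1))) *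
      emeasure (tree_factor mu m) (split_event A B) * Pr"
    have "?c sums ((\<Sum>k. ?c (Suc k)) + ?c 0)" by (rule sums_Suc) (rule summable_sums, simp)
    then have "(\<Sum>m. ?c m) = (\<Sum>k. ?c (Suc k)) + ?c 0" by (rule sums_unique[symmetric])
    also have "(\<Sum>k. ?c (Suc k)) =
        (\<Sum>k. ennreal (pmf mu 0 * (1 - pmf mu 0) ^ k)) * (emeasure (GW_spine mu) (split_event A B) * Pr)"
      by (simp add: tree_factor_def mult.assoc ennreal_suminf_multc)
    finally show ?thesis by (simp add: suminf_geometric_pmf_0 tree_factor_def add.commute)
  qed
  also have "\<dots> = emeasure (GW mu) A * emeasure (GW_spine mu) B * Pr"
    by (simp flip: distrib_right emeasure_GW_add_GW_spine_split_event)
  finally show ?thesis unfolding X_def Pr_def .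
qed

lemma distr_tree_product_tau: "distr (tree_product mu) (tree_product mu) tau = tree_product mu"
  unfolding tree_product_eq_PiM
proof (rule tree_factor.PiM_eq)
  fix J :: "nat set" and F :: "nat \<Rightarrow> nat list set set"
  assume J: "finite J" "J \<subseteq> UNIV"
  let ?M = "PiM UNIV (tree_factor mu)"
  define A where "A = (if 0 \<in> J then F 0 else UNIV)"
  define B where "B = (if 1 \<in> J then F 1 else UNIV)"
  define R where "R = J - {0, 1}"
  have R: "finite R" "\<forall>j\<in>R. 2 \<le> j" using J by (auto simp: R_def)
  have cylinder: "prod_emb UNIV (tree_factor mu) J (\<Pi>\<^sub>E j\<in>J. F j) = {g. \<forall>j\<in>J. g j \<in> F j}"
    by (auto simp: prod_emb_iff)
  have "{g. \<forall>j\<in>J. g j \<in> F j} \<in> sets ?M"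
    using sets_tree_product_Ball[OF sets_tree_product_coord] unfolding tree_product_eq_PiM .
  then have "emeasure (distr ?M ?M tau) (prod_emb UNIV (tree_factor mu) J (\<Pi>\<^sub>E j\<in>J. F j)) =
      emeasure ?M (tau -` {g. \<forall>j\<in>J. g j \<in> F j} \<inter> space ?M)"
    unfolding cylinder by (rule emeasure_distr[OF measurable_tau[of mu, unfolded tree_product_eq_PiM]])
  also have "tau -` {g. \<forall>j\<in>J. g j \<in> F j} \<inter> space ?M =
      {f. tau f 0 \<in> A \<and> tau f 1 \<in> B \<and> (\<forall>j\<in>R. tau f j \<in> F j)}"
    unfolding A_def B_def R_def by auto
  also have "emeasure ?M \<dots> = emeasure (GW mu) A * emeasure (GW_spine mu) B * (\<Prod>j\<in>R. emeasure (GW_spine mu) (F j))"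
    using emeasure_tau_cylinder[OF R, of A B F] unfolding tree_product_eq_PiM .
  also have "\<dots> = (\<Prod>j\<in>J. emeasure (tree_factor mu j) (F j))"
  proof -
    let ?G = "\<lambda>j. emeasure (tree_factor mu j) (if j \<in> J then F j else UNIV)"
    have "emeasure (tree_factor mu j) UNIV = 1" for j
      using prob_space.emeasure_space_1[OF prob_space_tree_factor] by simp
    then have "(\<Prod>j\<in>J. emeasure (tree_factor mu j) (F j)) = (\<Prod>j\<in>insert 0 (insert 1 R). ?G j)"
      by (intro prod.mono_neutral_cong_left) (use J in \<open>auto simp: R_def\<close>)
    also have "\<dots> = ?G 0 * (?G 1 * (\<Prod>j\<in>R. ?G j))"
      using R by (simp add: prod.insert R_def)
    also have "(\<Prod>j\<in>R. ?G j) = (\<Prod>j\<in>R. emeasure (GW_spine mu) (F j))"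
      by (intro prod.cong) (auto simp: R_def tree_factor_def)
    also have "?G 0 = emeasure (GW mu) A" by (simp add: A_def tree_factor_def)
    also have "?G 1 = emeasure (GW_spine mu) B" by (simp add: B_def tree_factor_def)
    finally show ?thesis by (simp add: mult.assoc)
  qed
  finally show "emeasure (distr ?M ?M tau) (prod_emb UNIV (tree_factor mu) J (\<Pi>\<^sub>E j\<in>J. F j)) =
      (\<Prod>j\<in>J. emeasure (tree_factor mu j) (F j))" .
qed simp

end

lemma distr_restrict_space_full_measure:
  assumes T: "T \<in> measurable M M" and invariant: "distr M M T = M"
    and \<Omega>: "\<Omega> \<in> sets M" "\<And>x. x \<in> \<Omega> \<Longrightarrow> T x \<in> \<Omega>" and null: "space M - \<Omega> \<in> null_sets M"
  shows "T \<in> measurable (restrict_space M \<Omega>) (restrict_space M \<Omega>)"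
    and "distr (restrict_space M \<Omega>) (restrict_space M \<Omega>) T = restrict_space M \<Omega>"
proof -
  have \<Omega>_space: "\<Omega> \<inter> space M = \<Omega>" using sets.sets_into_space[OF \<Omega>(1)] by blast
  show T\<Omega>: "T \<in> measurable (restrict_space M \<Omega>) (restrict_space M \<Omega>)"
    by (intro measurable_restrict_space2 measurable_restrict_space1 T)
       (use \<Omega>(2) in \<open>auto simp: space_restrict_space\<close>)
  show "distr (restrict_space M \<Omega>) (restrict_space M \<Omega>) T = restrict_space M \<Omega>"
  proof (rule measure_eqI)
    fix A assume "A \<in> sets (distr (restrict_space M \<Omega>) (restrict_space M \<Omega>) T)"
    then have A: "A \<in> sets (restrict_space M \<Omega>)" "A \<subseteq> \<Omega>" "A \<in> sets M"
      using sets_restrict_space_iff[of \<Omega> M] \<Omega>(1) \<Omega>_space by auto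
    have pre: "T -` A \<inter> space M \<in> sets M" using measurable_sets[OF T A(3)] .
    have "T -` A \<inter> space (restrict_space M \<Omega>) = T -` A \<inter> space M \<inter> \<Omega>"
      using \<Omega>_space by (auto simp: space_restrict_space)
    then have "emeasure (distr (restrict_space M \<Omega>) (restrict_space M \<Omega>) T) A =
        emeasure M (T -` A \<inter> space M \<inter> \<Omega>)"
      using emeasure_distr[OF T\<Omega> A(1)] emeasure_restrict_space[of \<Omega> M] \<Omega>(1) \<Omega>_space by simp
    also have "T -` A \<inter> space M \<inter> \<Omega> = T -` A \<inter> space M - (space M - \<Omega>)" by blast
    also have "emeasure M \<dots> = emeasure M (T -` A \<inter> space M)"
      by (rule emeasure_Diff_null_set[OF null pre])
    also have "\<dots> = emeasure M A"
      using emeasure_distr[OF T A(3)] invariant by simp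
    also have "\<dots> = emeasure (restrict_space M \<Omega>) A"
      using emeasure_restrict_space[of \<Omega> M A] \<Omega>(1) \<Omega>_space A(2) by simp
    finally show "emeasure (distr (restrict_space M \<Omega>) (restrict_space M \<Omega>) T) A =
        emeasure (restrict_space M \<Omega>) A" .
  qed simp
qed

theorem proposition2p1:
  fixes mu :: "nat pmf"
  assumes critical: "(\<lambda>k. real k * pmf mu k) sums 1"
    and nondeg: "pmf mu 1 \<noteq> 1"
  shows "tau \<in> measurable (P_mu mu) (P_mu mu) \<and> distr (P_mu mu) (P_mu mu) tau = P_mu mu"
proof -
  have "space (tree_product mu) - infinite_trees \<in> null_sets (tree_product mu)"
    using null_sets_compl_infinite_trees[OF critical nondeg] by simp
  from distr_restrict_space_full_measure[OF measurable_tau distr_tree_product_tau[OF critical nondeg]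
      sets_infinite_trees tau_in_infinite_trees this]
  show ?thesis unfolding P_mu_def by blast
qed
end
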